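(* Let $Y$ be an asymptotic-subsequential-$c_0$ Banach space. Then there is no sequence of maps $f_k:([\mathbb N]^k,d^{(k)}_{\mathsf H})\to Y$, $k\in\mathbb N$, forming a sequence of equi-coarse embeddings, such that for every $k$ there is a normalized weakly null array $(y^{(i)}_j:1\le i\le k,\ j\in\mathbb N)$ in $Y$ with $f_k(\bar m)=\sum_{i=1}^ky^{(i)}_{m_i}$ for all $\bar m=\{m_1<m_2<\dots<m_k\}\in[\mathbb N]^k$.
   Context: $d^{(k)}_{\mathsf H}(\bar m,\bar n)=|\{j:m_j\ne n_j\}|$. Maps $f_k$ are equi-coarse embeddings if there are non-decreasing $\rho,\omega:[0,\infty)\to[0,\infty)$, $\rho(t)\to\infty$, with $\rho(d(x,y))\le\|f_k(x)-f_k(y)\|\le\omega(d(x,y))$ for all $k,x,y$. A normalized weakly null array of height $k$: unit vectors $y^{(i)}_j$ with each row $(y^{(i)}_j)_j$ weakly null. Finite basic sequences are $C$-equivalent if $\frac1A\|\sum a_ix_i\|\le\|\sum a_iy_i\|\le B\|\sum a_ix_i\|$ with $AB\le C$. $\{Y\}_N$ is the set of norms $E$ on $\mathbb R^N$ with normalized monotone unit vector basis $(e_j)$ such that for every $\varepsilon>0$, for every closed finite-codimensional $Y_1$ there is $x_1\in S_{Y_1}$, ..., for every closed finite-codimensional $Y_N$ there is $x_N\in S_{Y_N}$ with $(x_j)$ $(1+\varepsilon)$-equivalent to $(e_j)$. An infinite dimensional $Y$ is asymptotic-subsequential-$c_0$ if there is $C\ge1$ such that for every $n$ there is $N$ such that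 for every $E\in\{Y\}_N$ there are $i_1<\dots<i_n$ with $(e_{i_k})_{k=1}^n$ $C$-equivalent to the unit vector basis of $\ell_\infty^n$. *)

theory Defs
  imports "HOL-Analysis.Analysis"
begin

definition elem_of :: "nat set \<Rightarrow> nat \<Rightarrow> nat" where
  "elem_of A j = sorted_list_of_set A ! j"

definition ksubsets :: "nat \<Rightarrow> nat set set" where
  "ksubsets k = {A. finite A \<and> card A = k}"

definition hamming_dist :: "nat \<Rightarrow> nat set \<Rightarrow> nat set \<Rightarrow> nat" where
  "hamming_dist k A B = card {j. j < k \<and> elem_of A j \<noteq> elem_of B j}"

definition equi_coarse_embeddings :: "(nat \<Rightarrow> nat set \<Rightarrow> 'a::real_normed_vector) \<Rightarrow> bool" where
  "equi_coarse_embeddings f \<longleftrightarrow>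
     (\<exists>\<rho> \<omega> :: real \<Rightarrow> real.
        mono_on {0..} \<rho> \<and> mono_on {0..} \<omega> \<and>
        (\<forall>t\<ge>0. \<rho> t \<ge> 0 \<and> \<omega> t \<ge> 0) \<and>
        filterlim \<rho> at_top at_top \<and>
        (\<forall>k\<ge>1. \<forall>A\<in>ksubsets k. \<forall>B\<in>ksubsets k.
            \<rho> (real (hamming_dist k A B)) \<le> norm (f k A - f k B) \<and>
            norm (f k A - f k B) \<le> \<omega> (real (hamming_dist k A B))))"

definition weakly_null :: "(nat \<Rightarrow> 'a::real_normed_vector) \<Rightarrow> bool" where
  "weakly_null x \<longleftrightarrow>
     (\<forall>\<phi> :: 'a \<Rightarrow> real. bounded_linear \<phi> \<longrightarrow> (\<lambda>j. \<phi> (x j)) \<longlonglongrightarrow> 0)"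

definition normalized_weakly_null_array :: "nat \<Rightarrow> (nat \<Rightarrow> nat \<Rightarrow> 'a::real_normed_vector) \<Rightarrow> bool" where
  "normalized_weakly_null_array k y \<longleftrightarrow>
     (\<forall>i\<in>{1..k}. (\<forall>j. norm (y i j) = 1) \<and> weakly_null (y i))"

text \<open>Two finite sequences of length n, given through the norms p a = norm of sum a_i x_i
  and q a = norm of sum a_i y_i of their linear combinations with coefficients a,
  are C-equivalent.\<close>
definition C_equiv :: "nat \<Rightarrow> real \<Rightarrow> ((nat \<Rightarrow> real) \<Rightarrow> real) \<Rightarrow> ((nat \<Rightarrow> real) \<Rightarrow> real) \<Rightarrow> bool" where
  "C_equiv n C p q \<longleftrightarrow>
     (\<exists>A B. A > 0 \<and> B > 0 \<and> A * B \<le> C \<and>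
        (\<forall>a::nat \<Rightarrow> real. (1 / A) * p (\<lambda>i. if i < n then a i else 0) \<le> q (\<lambda>i. if i < n then a i else 0) \<and>
                q (\<lambda>i. if i < n then a i else 0) \<le> B * p (\<lambda>i. if i < n then a i else 0)))"

definition vec_norm :: "nat \<Rightarrow> (nat \<Rightarrow> 'a::real_normed_vector) \<Rightarrow> (nat \<Rightarrow> real) \<Rightarrow> real" where
  "vec_norm n x a = norm (\<Sum>i<n. a i *\<^sub>R x i)"

text \<open>R^N is represented by functions nat => real vanishing outside {..<N};
  E is a norm on this space.\<close>
definition supp_in :: "nat \<Rightarrow> (nat \<Rightarrow> real) \<Rightarrow> bool" where
  "supp_in N a \<longleftrightarrow> (\<forall>i\<ge>N. a i = 0)"

definition unit_vec :: "nat \<Rightarrow> nat \<Rightarrow> real" where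
  "unit_vec j = (\<lambda>i. if i = j then 1 else 0)"

definition is_norm_on :: "nat \<Rightarrow> ((nat \<Rightarrow> real) \<Rightarrow> real) \<Rightarrow> bool" where
  "is_norm_on N E \<longleftrightarrow>
     (\<forall>a. supp_in N a \<longrightarrow> E a \<ge> 0 \<and> (E a = 0 \<longleftrightarrow> a = (\<lambda>_. 0))) \<and>
     (\<forall>a c. supp_in N a \<longrightarrow> E (\<lambda>i. c * a i) = \<bar>c\<bar> * E a) \<and>
     (\<forall>a b. supp_in N a \<longrightarrow> supp_in N b \<longrightarrow> E (\<lambda>i. a i + b i) \<le> E a + E b)"

definition normalized_monotone_norm :: "nat \<Rightarrow> ((nat \<Rightarrow> real) \<Rightarrow> real) \<Rightarrow> bool" where
  "normalized_monotone_norm N E \<longleftrightarrow>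
     is_norm_on N E \<and>
     (\<forall>j<N. E (unit_vec j) = 1) \<and>
     (\<forall>a m n. supp_in N a \<longrightarrow> m \<le> n \<longrightarrow> n \<le> N \<longrightarrow>
        E (\<lambda>i. if i < m then a i else 0) \<le> E (\<lambda>i. if i < n then a i else 0))"

definition fin_codim_closed_subspace :: "'a::real_normed_vector set \<Rightarrow> bool" where
  "fin_codim_closed_subspace Z \<longleftrightarrow>
     subspace Z \<and> closed Z \<and> (\<exists>F. finite F \<and> span (Z \<union> F) = UNIV)"

text \<open>The asymptotic game: r further rounds remain, k vectors x 0, ..., x (k-1) are chosen;
  in each round the subspace player picks a closed finite-codimensional subspace, the
  vector player answers by a unit vector in it; finally the predicate P must hold.\<close>
fun asym_game :: "((nat \<Rightarrow> 'a::real_normed_vector) \<Rightarrow> bool) \<Rightarrow> nat \<Rightarrow> nat \<Rightarrow> (nat \<Rightarrow> 'a) \<Rightarrow> bool" where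
  "asym_game P 0 k x = P x"
| "asym_game P (Suc r) k x =
     (\<forall>Z. fin_codim_closed_subspace Z \<longrightarrow>
        (\<exists>v\<in>Z. norm v = 1 \<and> asym_game P r (Suc k) (x(k := v))))"

definition asym_structure :: "'a::real_normed_vector itself \<Rightarrow> nat \<Rightarrow> ((nat \<Rightarrow> real) \<Rightarrow> real) set" where
  "asym_structure TYPE('a) N =
     {E. normalized_monotone_norm N E \<and>
         (\<forall>\<epsilon>>0. asym_game
            (\<lambda>x::nat \<Rightarrow> 'a. C_equiv N (1 + \<epsilon>) (vec_norm N x) (\<lambda>a. E (\<lambda>i. if i < N then a i else 0)))
            N 0 (\<lambda>_. 0))}"

definition sup_norm :: "nat \<Rightarrow> (nat \<Rightarrow> real) \<Rightarrow> real" where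
  "sup_norm n a = (if n = 0 then 0 else Max ((\<lambda>i. \<bar>a i\<bar>) ` {..<n}))"

definition asymptotic_subsequential_c0 :: "'a::real_normed_vector itself \<Rightarrow> bool" where
  "asymptotic_subsequential_c0 TYPE('a) \<longleftrightarrow>
     \<not> (\<exists>F::'a set. finite F \<and> span F = UNIV) \<and>
     (\<exists>C\<ge>1. \<forall>n. \<exists>N. \<forall>E \<in> asym_structure TYPE('a) N.
        \<exists>idx::nat \<Rightarrow> nat. strict_mono_on {..<n} idx \<and> (\<forall>k<n. idx k < N) \<and>
          C_equiv n C
            (\<lambda>a. E (\<lambda>j. \<Sum>k<n. if j = idx k then a k else 0))
            (sup_norm n))"

end

theory Submission
  imports Defs
begin

text \<open>Fix an ultrafilter \<open>U\<close> on \<open>\<nat>\<close> refining the cofinite filter. A normalized weakly null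
  array \<open>y\<^sub>0, \<dots>, y\<^sub>N\<^sub>-\<^sub>1\<close> induces a norm \<open>E\<close> on \<open>\<real>\<^sup>N\<close>: \<open>E a\<close> is the iterated \<open>U\<close>-limit of
  \<open>\<parallel>\<Sum>i<N. a i *\<^sub>R y i (m i)\<parallel>\<close> as \<open>m 0, \<dots>, m (N - 1)\<close> tend to infinity in turn.
  Since a weakly null sequence eventually comes arbitrarily close to every closed subspace of
  finite codimension, the vector player of the asymptotic game can realise \<open>E\<close>, so \<open>E \<in> {Y}\<^sub>N\<close>;
  the Hahn--Banach theorem makes the basis of \<open>E\<close> monotone. If \<open>Y\<close> is
  asymptotic-subsequential-\<open>c\<^sub>0\<close> with constant \<open>C\<close>, then for every \<open>n\<close> there are \<open>N\<close> and
  an \<open>n\<close>-element set \<open>J\<close> with \<open>E 1\<^sub>J \<le> C\<close>. Unwinding the limits gives two increasing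
  \<open>N\<close>-tuples that differ exactly on \<open>J\<close> and whose images under \<open>f\<^sub>N\<close> are less than \<open>2C + 2\<close>
  apart, although their Hamming distance is \<open>n\<close>; this contradicts \<open>\<rho>(n) \<rightarrow> \<infinity>\<close>.\<close>

section \<open>Ultrafilters\<close>

definition is_ultrafilter :: "'a filter \<Rightarrow> bool" where
  "is_ultrafilter F \<longleftrightarrow> F \<noteq> bot \<and> (\<forall>P. eventually P F \<or> eventually (\<lambda>x. \<not> P x) F)"

lemma ultrafilter_finer_exists:
  assumes "F \<noteq> bot"
  shows "\<exists>U. U \<le> F \<and> is_ultrafilter U"
proof -
  define A where "A = {G. G \<noteq> bot \<and> G \<le> F}"
  define finer :: "'a filter \<Rightarrow> 'a filter \<Rightarrow> bool" where "finer G H \<longleftrightarrow> H \<le> G" for G H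
  have "partial_order_on A (relation_of finer A)"
    by (rule partial_order_on_relation_ofI) (auto simp: finer_def)
  moreover have "\<exists>L\<in>A. \<forall>G\<in>C. finer G L" if C: "C \<in> Chains (relation_of finer A)" for C
  proof (cases "C = {}")
    case True
    then show ?thesis using assms by (auto simp: A_def)
  next
    case False
    have CA: "C \<subseteq> A" using Chains_relation_of[OF C] .
    have total: "G \<le> H \<or> H \<le> G" if "G \<in> C" "H \<in> C" for G H
      using C that unfolding Chains_def relation_of_def finer_def by blast
    have "eventually P (Inf C) \<longleftrightarrow> (\<exists>G\<in>C. eventually P G)" for P
      by (rule eventually_Inf_base[OF False]) (metis total inf.absorb1 inf.absorb2)
    then have "Inf C \<noteq> bot" using CA by (auto simp: A_def trivial_limit_def)
    moreover have "Inf C \<le> F" using False CA by (auto simp: A_def intro: Inf_lower2)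
    ultimately show ?thesis by (auto simp: A_def finer_def intro: Inf_lower)
  qed
  ultimately obtain U where U: "U \<in> A" and max: "\<And>G. G \<in> A \<Longrightarrow> G \<le> U \<Longrightarrow> G = U"
    using predicate_Zorn[of A finer] unfolding finer_def by blast
  have "eventually P U \<or> eventually (\<lambda>x. \<not> P x) U" for P
  proof (rule ccontr)
    assume neither: "\<not> (eventually P U \<or> eventually (\<lambda>x. \<not> P x) U)"
    define G where "G = inf U (principal {x. P x})"
    have "G \<noteq> bot"
      using neither by (simp add: G_def trivial_limit_def eventually_inf_principal)
    then have "G = U" using U by (intro max) (auto simp: A_def G_def intro: le_infI1)
    moreover have "eventually P G" by (simp add: G_def eventually_inf_principal)
    ultimately show False using neither by simp
  qed
  then show ?thesis using U by (auto simp: A_def is_ultrafilter_def)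
qed

lemma ultrafilter_tendsto_compact:
  assumes U: "is_ultrafilter F" and S: "compact S" and fS: "eventually (\<lambda>x. f x \<in> S) F"
  shows "\<exists>l\<in>S. (f \<longlongrightarrow> l) F"
proof -
  have "filtermap f F \<noteq> bot" using U by (simp add: is_ultrafilter_def filtermap_bot_iff)
  moreover have "eventually (\<lambda>y. y \<in> S) (filtermap f F)" using fS by (simp add: eventually_filtermap)
  ultimately obtain l where l: "l \<in> S" and cluster: "inf (nhds l) (filtermap f F) \<noteq> bot"
    using S unfolding compact_filter by blast
  have "eventually (\<lambda>x. f x \<in> V) F" if "open V" "l \<in> V" for V
  proof (rule ccontr)
    assume "\<not> eventually (\<lambda>x. f x \<in> V) F"
    then have "eventually (\<lambda>y. y \<notin> V) (filtermap f F)"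
      using U by (auto simp: is_ultrafilter_def eventually_filtermap)
    moreover have "eventually (\<lambda>y. y \<in> V) (nhds l)" using that by (rule eventually_nhds_in_open)
    ultimately have "eventually (\<lambda>_. False) (inf (nhds l) (filtermap f F))"
      unfolding eventually_inf by blast
    then show False using cluster by (simp add: trivial_limit_def)
  qed
  then show ?thesis using l by (auto simp: tendsto_def)
qed

lemma ultrafilter_Bfun_tendsto_Lim:
  fixes f :: "'a \<Rightarrow> 'b::{real_normed_vector, heine_borel}"
  assumes U: "is_ultrafilter F" and "Bfun f F"
  shows "(f \<longlongrightarrow> Lim F f) F"
proof -
  obtain K where "eventually (\<lambda>x. norm (f x) \<le> K) F" using \<open>Bfun f F\<close> by (auto simp: Bfun_def)
  then have "eventually (\<lambda>x. f x \<in> cball 0 K) F" by simp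
  then obtain l where "(f \<longlongrightarrow> l) F" using ultrafilter_tendsto_compact[OF U compact_cball] by blast
  then show ?thesis using U by (simp add: is_ultrafilter_def tendsto_Lim)
qed

section \<open>Norming functionals\<close>

text \<open>Partial functionals dominated by the norm are represented by their graphs, so that Zorn's
  lemma applies to set inclusion.\<close>
definition norming_graph :: "'a::real_normed_vector \<Rightarrow> ('a \<times> real) set \<Rightarrow> bool" where
  "norming_graph u G \<longleftrightarrow>
     (\<forall>x a b. (x, a) \<in> G \<longrightarrow> (x, b) \<in> G \<longrightarrow> a = b) \<and>
     (\<forall>x y a b. (x, a) \<in> G \<longrightarrow> (y, b) \<in> G \<longrightarrow> (x + y, a + b) \<in> G) \<and>
     (\<forall>x a c. (x, a) \<in> G \<longrightarrow> (c *\<^sub>R x, c * a) \<in> G) \<and>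
     (\<forall>x a. (x, a) \<in> G \<longrightarrow> a \<le> norm x) \<and>
     (u, norm u) \<in> G"

lemma norming_graphD:
  assumes "norming_graph u G"
  shows norming_graph_unique: "(x, a) \<in> G \<Longrightarrow> (x, b) \<in> G \<Longrightarrow> a = b"
    and norming_graph_add: "(x, a) \<in> G \<Longrightarrow> (y, b) \<in> G \<Longrightarrow> (x + y, a + b) \<in> G"
    and norming_graph_scale: "(x, a) \<in> G \<Longrightarrow> (c *\<^sub>R x, c * a) \<in> G"
    and norming_graph_le_norm: "(x, a) \<in> G \<Longrightarrow> a \<le> norm x"
    and norming_graph_base: "(u, norm u) \<in> G"
  using assms unfolding norming_graph_def by blast+

lemma norming_graph_line: "norming_graph u {(c *\<^sub>R u, c * norm u) | c. True}"
  unfolding norming_graph_def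
proof (intro conjI allI impI)
  fix x a b assume "(x, a) \<in> {(c *\<^sub>R u, c * norm u) | c. True}" "(x, b) \<in> {(c *\<^sub>R u, c * norm u) | c. True}"
  then obtain c d where "x = c *\<^sub>R u" "a = c * norm u" "x = d *\<^sub>R u" "b = d * norm u" by blast
  then show "a = b" by (cases "u = 0") auto
next
  fix x y a b assume "(x, a) \<in> {(c *\<^sub>R u, c * norm u) | c. True}" "(y, b) \<in> {(c *\<^sub>R u, c * norm u) | c. True}"
  then obtain c d where "x = c *\<^sub>R u" "a = c * norm u" "y = d *\<^sub>R u" "b = d * norm u" by blast
  then show "(x + y, a + b) \<in> {(c *\<^sub>R u, c * norm u) | c. True}"
    by (intro CollectI exI[of _ "c + d"]) (simp add: algebra_simps)
next
  fix x a e assume "(x, a) \<in> {(c *\<^sub>R u, c * norm u) | c. True}"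
  then obtain c where "x = c *\<^sub>R u" "a = c * norm u" by blast
  then show "(e *\<^sub>R x, e * a) \<in> {(c *\<^sub>R u, c * norm u) | c. True}"
    by (intro CollectI exI[of _ "e * c"]) simp
next
  fix x a assume "(x, a) \<in> {(c *\<^sub>R u, c * norm u) | c. True}"
  then show "a \<le> norm x" by (auto simp: mult_right_mono)
next
  show "(u, norm u) \<in> {(c *\<^sub>R u, c * norm u) | c. True}" by (intro CollectI exI[of _ 1]) simp
qed

lemma norming_graph_chain_Union:
  assumes "\<C> \<noteq> {}" and "\<And>G. G \<in> \<C> \<Longrightarrow> norming_graph u G"
    and chain: "\<And>G H. G \<in> \<C> \<Longrightarrow> H \<in> \<C> \<Longrightarrow> G \<subseteq> H \<or> H \<subseteq> G"
  shows "norming_graph u (\<Union>\<C>)"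
proof -
  have common: "\<exists>G\<in>\<C>. p \<in> G \<and> q \<in> G" if "p \<in> \<Union>\<C>" "q \<in> \<Union>\<C>" for p q
    using that chain by blast
  show ?thesis
    unfolding norming_graph_def
  proof (intro conjI allI impI)
    show "a = b" if "(x, a) \<in> \<Union>\<C>" "(x, b) \<in> \<Union>\<C>" for x a b
      using common[OF that] assms(2) norming_graph_unique by metis
    show "(x + y, a + b) \<in> \<Union>\<C>" if "(x, a) \<in> \<Union>\<C>" "(y, b) \<in> \<Union>\<C>" for x y a b
      using common[OF that] assms(2) norming_graph_add by blast
  qed (use assms(1,2) norming_graph_scale norming_graph_le_norm norming_graph_base in blast)+
qed

text \<open>The one-dimensional step of the Hahn--Banach theorem: the value \<open>\<xi>\<close> at the new vector
  is squeezed between \<open>sup (a - \<parallel>s - x\<^sub>0\<parallel>)\<close> and \<open>inf (\<parallel>s + x\<^sub>0\<parallel> - a)\<close> over the graph.\<close>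
lemma norming_graph_extension_value:
  assumes M: "norming_graph u M"
  obtains \<xi> where "\<And>s a t. (s, a) \<in> M \<Longrightarrow> a + t * \<xi> \<le> norm (s + t *\<^sub>R x0)"
proof -
  note add = norming_graph_add[OF M] and scale = norming_graph_scale[OF M]
    and le_norm = norming_graph_le_norm[OF M]
  have zero: "(0, 0) \<in> M" using scale[OF norming_graph_base[OF M], of 0] by simp
  define S where "S = {a - norm (s - x0) | s a. (s, a) \<in> M}"
  have key: "a - norm (s - x0) \<le> norm (s' + x0) - b" if "(s, a) \<in> M" "(s', b) \<in> M" for s a s' b
  proof -
    have "a + b \<le> norm ((s - x0) + (s' + x0))" using le_norm[OF add[OF that]] by simp
    also have "\<dots> \<le> norm (s - x0) + norm (s' + x0)" by (rule norm_triangle_ineq)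
    finally show ?thesis by simp
  qed
  have "S \<noteq> {}" unfolding S_def using zero by blast
  have "bdd_above S" unfolding S_def bdd_above_def using key[OF _ zero] by blast
  define \<xi> where "\<xi> = Sup S"
  have xi_ge: "a - norm (s - x0) \<le> \<xi>" if "(s, a) \<in> M" for s a
    unfolding \<xi>_def using that \<open>bdd_above S\<close> by (intro cSup_upper) (auto simp: S_def)
  have xi_le: "\<xi> \<le> norm (s + x0) - a" if "(s, a) \<in> M" for s a
    unfolding \<xi>_def using \<open>S \<noteq> {}\<close> key[OF _ that] by (intro cSup_least) (auto simp: S_def)
  have rescale: "r * norm ((1 / r) *\<^sub>R s + e *\<^sub>R x0) = norm (s + (r * e) *\<^sub>R x0)" if "r > 0" for r e s
  proof -
    have "r * norm ((1 / r) *\<^sub>R s + e *\<^sub>R x0) = norm (r *\<^sub>R ((1 / r) *\<^sub>R s + e *\<^sub>R x0))" using that by simp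
    also have "r *\<^sub>R ((1 / r) *\<^sub>R s + e *\<^sub>R x0) = s + (r * e) *\<^sub>R x0" using that by (simp add: algebra_simps)
    finally show ?thesis .
  qed
  have "a + t * \<xi> \<le> norm (s + t *\<^sub>R x0)" if "(s, a) \<in> M" for s a t
  proof (cases t "0::real" rule: linorder_cases)
    case less
    have "(1 / - t) * a - norm ((1 / - t) *\<^sub>R s + (- 1) *\<^sub>R x0) \<le> \<xi>"
      using xi_ge[OF scale[OF that, of "1 / - t"]] by simp
    then have "- t * ((1 / - t) * a) - - t * norm ((1 / - t) *\<^sub>R s + (- 1) *\<^sub>R x0) \<le> - t * \<xi>"
      using less mult_left_mono[of _ \<xi> "- t"] by (simp only: right_diff_distrib[symmetric])
    moreover have "- t * ((1 / - t) * a) = a" using less by simp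
    moreover have "- t * norm ((1 / - t) *\<^sub>R s + (- 1) *\<^sub>R x0) = norm (s + t *\<^sub>R x0)"
      using rescale[where r = "- t" and e = "- 1"] less by simp
    ultimately show ?thesis by linarith
  next
    case equal
    then show ?thesis using le_norm[OF that] by simp
  next
    case greater
    have "\<xi> \<le> norm ((1 / t) *\<^sub>R s + 1 *\<^sub>R x0) - (1 / t) * a"
      using xi_le[OF scale[OF that, of "1 / t"]] by simp
    then have "t * \<xi> \<le> t * norm ((1 / t) *\<^sub>R s + 1 *\<^sub>R x0) - t * ((1 / t) * a)"
      using greater mult_left_mono[of \<xi> _ t] by (simp only: right_diff_distrib[symmetric])
    moreover have "t * ((1 / t) * a) = a" using greater by simp
    moreover have "t * norm ((1 / t) *\<^sub>R s + 1 *\<^sub>R x0) = norm (s + t *\<^sub>R x0)"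
      using rescale[where r = t and e = 1] greater by simp
    ultimately show ?thesis by linarith
  qed
  then show ?thesis by (rule that)
qed

lemma norming_graph_extend:
  assumes M: "norming_graph u M" and x0: "\<nexists>a. (x0, a) \<in> M"
  shows "\<exists>M'. norming_graph u M' \<and> M \<subset> M'"
proof -
  note add = norming_graph_add[OF M] and scale = norming_graph_scale[OF M]
  obtain \<xi> where dominated: "\<And>s a t. (s, a) \<in> M \<Longrightarrow> a + t * \<xi> \<le> norm (s + t *\<^sub>R x0)"
    using norming_graph_extension_value[OF M] by blast
  define M' where "M' = {(s + t *\<^sub>R x0, a + t * \<xi>) | s a t. (s, a) \<in> M}"
  have M'I: "(s + t *\<^sub>R x0, a + t * \<xi>) \<in> M'" if "(s, a) \<in> M" for s a t
    unfolding M'_def using that by blast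
  have same_coefficient: "t = t'"
    if "(s, a) \<in> M" "(s', b) \<in> M" "s + t *\<^sub>R x0 = s' + t' *\<^sub>R x0" for s a s' b t t'
  proof (rule ccontr)
    assume "t \<noteq> t'"
    have "((1 / (t' - t)) *\<^sub>R (s + (- 1) *\<^sub>R s'), (1 / (t' - t)) * (a + (- 1) * b)) \<in> M"
      using scale[OF add[OF that(1) scale[OF that(2)]]] .
    moreover have "s - s' = (t' - t) *\<^sub>R x0" using that(3) by (simp add: algebra_simps)
    then have "(1 / (t' - t)) *\<^sub>R (s + (- 1) *\<^sub>R s') = x0" using \<open>t \<noteq> t'\<close> by simp
    ultimately show False using x0 by auto
  qed
  have "norming_graph u M'"
    unfolding norming_graph_def
  proof (intro conjI allI impI)
    fix x a b assume "(x, a) \<in> M'" "(x, b) \<in> M'"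
    then obtain s a0 t s' b0 t' where st: "(s, a0) \<in> M" "(s', b0) \<in> M" "x = s + t *\<^sub>R x0"
      "a = a0 + t * \<xi>" "x = s' + t' *\<^sub>R x0" "b = b0 + t' * \<xi>" unfolding M'_def by blast
    then have "t = t'" using same_coefficient by metis
    then show "a = b" using st norming_graph_unique[OF M] by auto
  next
    fix x y a b assume "(x, a) \<in> M'" "(y, b) \<in> M'"
    then obtain s a0 t s' b0 t' where st: "(s, a0) \<in> M" "(s', b0) \<in> M" "x = s + t *\<^sub>R x0"
      "a = a0 + t * \<xi>" "y = s' + t' *\<^sub>R x0" "b = b0 + t' * \<xi>" unfolding M'_def by blast
    have "(s + s' + (t + t') *\<^sub>R x0, a0 + b0 + (t + t') * \<xi>) \<in> M'" using M'I[OF add[OF st(1,2)]] .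
    then show "(x + y, a + b) \<in> M'" using st by (simp add: algebra_simps)
  next
    fix x a c assume "(x, a) \<in> M'"
    then obtain s a0 t where st: "(s, a0) \<in> M" "x = s + t *\<^sub>R x0" "a = a0 + t * \<xi>"
      unfolding M'_def by blast
    have "(c *\<^sub>R s + (c * t) *\<^sub>R x0, c * a0 + (c * t) * \<xi>) \<in> M'" using M'I[OF scale[OF st(1)]] .
    then show "(c *\<^sub>R x, c * a) \<in> M'" using st by (simp add: algebra_simps)
  next
    fix x a assume "(x, a) \<in> M'"
    then show "a \<le> norm x" unfolding M'_def using dominated by blast
  next
    show "(u, norm u) \<in> M'" using M'I[OF norming_graph_base[OF M], of 0] by simp
  qed
  moreover have "M \<subseteq> M'" using M'I[of _ _ 0] by auto
  moreover have "(x0, \<xi>) \<in> M' - M"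
    using M'I[OF scale[OF norming_graph_base[OF M], of 0], of 1] x0 by auto
  ultimately show ?thesis by blast
qed

lemma norming_functional:
  fixes u :: "'a::real_normed_vector"
  shows "\<exists>\<phi>. bounded_linear \<phi> \<and> \<phi> u = norm u \<and> (\<forall>x. \<bar>\<phi> x\<bar> \<le> norm x)"
proof -
  have "\<exists>M\<in>Collect (norming_graph u). \<forall>G\<in>Collect (norming_graph u). M \<subseteq> G \<longrightarrow> G = M"
  proof (rule subset_Zorn_nonempty)
    show "Collect (norming_graph u) \<noteq> {}" using norming_graph_line by blast
    show "\<Union>\<C> \<in> Collect (norming_graph u)" if "\<C> \<noteq> {}" "subset.chain (Collect (norming_graph u)) \<C>" for \<C>
      using that norming_graph_chain_Union[of \<C> u] by (auto simp: subset_chain_def)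
  qed
  then obtain M where M: "norming_graph u M" and max: "\<And>G. norming_graph u G \<Longrightarrow> M \<subseteq> G \<Longrightarrow> G = M"
    by blast
  have total: "\<exists>a. (x, a) \<in> M" for x
    using norming_graph_extend[OF M] max by blast
  define \<phi> where "\<phi> x = (THE a. (x, a) \<in> M)" for x
  have graph: "(x, \<phi> x) \<in> M" for x
    unfolding \<phi>_def using total norming_graph_unique[OF M] by (metis theI)
  note unique = norming_graph_unique[OF M graph]
  have add: "\<phi> (x + y) = \<phi> x + \<phi> y" for x y using unique norming_graph_add[OF M graph graph] .
  have scale: "\<phi> (c *\<^sub>R x) = c * \<phi> x" for c x using unique norming_graph_scale[OF M graph] .
  have bound: "\<bar>\<phi> x\<bar> \<le> norm x" for x
    using norming_graph_le_norm[OF M graph, of x] norming_graph_le_norm[OF M graph, of "- x"]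
      scale[of "- 1" x] by simp
  have "bounded_linear \<phi>"
    by (rule bounded_linear_intro[where K = 1]) (use add scale bound in auto)
  then show ?thesis using unique[OF norming_graph_base[OF M]] bound by blast
qed

section \<open>Closed finite-codimensional subspaces and weakly null sequences\<close>

lemma abs_scaleR_infdist_le_norm:
  fixes Z :: "'a::real_normed_vector set"
  assumes "subspace Z" "z \<in> Z"
  shows "\<bar>c\<bar> * infdist g Z \<le> norm (z + c *\<^sub>R g)"
proof (cases "c = 0")
  case False
  have "(- (1 / c)) *\<^sub>R z \<in> Z" by (rule subspace_scale[OF assms])
  then have "infdist g Z \<le> dist g ((- (1 / c)) *\<^sub>R z)" by (rule infdist_le)
  also have "dist g ((- (1 / c)) *\<^sub>R z) = norm ((1 / c) *\<^sub>R (z + c *\<^sub>R g))"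
    using False by (simp add: dist_norm algebra_simps)
  also have "\<dots> = norm (z + c *\<^sub>R g) / \<bar>c\<bar>" by simp
  finally show ?thesis using False by (simp add: field_simps)
qed simp

lemma closed_span_insert:
  fixes Z :: "'a::banach set"
  assumes cl: "closed Z" and sub: "subspace Z"
  shows "closed (span (insert g Z))"
proof (cases "g \<in> Z")
  case True
  then have "span (insert g Z) = Z" using sub by (simp add: insert_absorb)
  then show ?thesis using cl by simp
next
  case False
  have "Z \<noteq> {}" using sub subspace_0 by blast
  define d where "d = infdist g Z"
  have d: "d > 0" unfolding d_def using infdist_pos_not_in_closed[OF cl \<open>Z \<noteq> {}\<close> False] .
  have "span Z = Z" using sub by simp
  then have sp: "span (insert g Z) = {x. \<exists>k. x - k *\<^sub>R g \<in> Z}"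
    using span_insert[of g Z] by (simp del: span_eq_iff)
  show ?thesis
    unfolding closed_sequential_limits
  proof (intro allI impI, elim conjE)
    fix x l assume "\<forall>n. x n \<in> span (insert g Z)" and lim: "x \<longlonglongrightarrow> l"
    then have "\<forall>n. \<exists>k. x n - k *\<^sub>R g \<in> Z" unfolding sp by blast
    then obtain c where c: "\<And>n. x n - c n *\<^sub>R g \<in> Z" by (metis choice)
    have coeff_dist: "\<bar>c m - c n\<bar> * d \<le> norm (x m - x n)" for m n
    proof -
      have "(x m - c m *\<^sub>R g) - (x n - c n *\<^sub>R g) \<in> Z" using c sub by (simp add: subspace_diff)
      from abs_scaleR_infdist_le_norm[OF sub this, of "c m - c n" g]
      show ?thesis unfolding d_def by (simp add: algebra_simps)
    qed
    have "Cauchy c"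
    proof (rule CauchyI)
      fix e :: real assume "e > 0"
      then obtain M where M: "\<forall>m\<ge>M. \<forall>n\<ge>M. norm (x m - x n) < e * d"
        using CauchyD[OF LIMSEQ_imp_Cauchy[OF lim], of "e * d"] d by auto
      have "norm (c m - c n) < e" if "m \<ge> M" "n \<ge> M" for m n
      proof -
        have "\<bar>c m - c n\<bar> * d < e * d" using M that coeff_dist[of m n] by fastforce
        then show ?thesis using d by simp
      qed
      then show "\<exists>M. \<forall>m\<ge>M. \<forall>n\<ge>M. norm (c m - c n) < e" by blast
    qed
    then obtain c0 where c0: "c \<longlonglongrightarrow> c0" using Cauchy_convergent_iff convergent_def by blast
    have "(\<lambda>n. x n - c n *\<^sub>R g) \<longlonglongrightarrow> l - c0 *\<^sub>R g"
      by (intro tendsto_intros lim c0)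
    with closed_sequentially[OF cl c] have "l - c0 *\<^sub>R g \<in> Z" .
    then show "l \<in> span (insert g Z)" unfolding sp by blast
  qed
qed

lemma closed_span_Un_finite:
  fixes Z :: "'a::banach set"
  assumes "closed Z" "subspace Z" "finite G"
  shows "closed (span (Z \<union> G))"
  using \<open>finite G\<close>
proof (induction G rule: finite_induct)
  case empty
  have "span Z = Z" using assms(2) by simp
  then show ?case using assms(1) by (simp del: span_eq_iff)
next
  case (insert g G)
  have "span (Z \<union> insert g G) = span (insert g (span (Z \<union> G)))"
    by (simp add: span_insert span_span)
  then show ?case using closed_span_insert[OF insert.IH subspace_span] by simp
qed

lemma bounded_linear_closed_kernel:
  fixes \<psi> :: "'a::real_normed_vector \<Rightarrow> real"
  assumes "linear \<psi>" and cl: "closed {x. \<psi> x = 0}"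
  shows "bounded_linear \<psi>"
proof (cases "\<forall>x. \<psi> x = 0")
  case True
  then show ?thesis by (intro bounded_linear_intro[where K = 0]) auto
next
  case False
  interpret linear \<psi> by fact
  obtain w where "\<psi> w \<noteq> 0" using False by blast
  define u where "u = (1 / \<psi> w) *\<^sub>R w"
  have u: "\<psi> u = 1" unfolding u_def using \<open>\<psi> w \<noteq> 0\<close> by (simp add: scale)
  define K where "K = {x. \<psi> x = 0}"
  define r where "r = infdist u K"
  have "0 \<in> K" "u \<notin> K" using u by (auto simp: K_def zero)
  then have r: "r > 0" unfolding r_def using infdist_pos_not_in_closed[of K u] cl K_def by blast
  have bound: "\<bar>\<psi> y\<bar> \<le> norm y * (1 / r)" for y
  proof (cases "\<psi> y = 0")
    case False
    have "u - (1 / \<psi> y) *\<^sub>R y \<in> K" using u False by (simp add: K_def diff scale)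
    then have "r \<le> dist u (u - (1 / \<psi> y) *\<^sub>R y)" unfolding r_def by (rule infdist_le)
    also have "\<dots> = norm y / \<bar>\<psi> y\<bar>" by (simp add: dist_norm)
    finally show ?thesis using False r by (simp add: field_simps)
  qed (use r in simp)
  show ?thesis by (rule bounded_linear_intro[where K = "1 / r"]) (use bound in \<open>auto simp: add scale\<close>)
qed

lemma coordinate_functional_exists:
  fixes W :: "'a::real_normed_vector set"
  assumes sub: "subspace W" and cl: "closed W" and g: "g \<notin> W" and spans: "\<And>x. \<exists>k. x - k *\<^sub>R g \<in> W"
  shows "\<exists>\<psi>. bounded_linear \<psi> \<and> (\<forall>x k. x - k *\<^sub>R g \<in> W \<longleftrightarrow> \<psi> x = k)"
proof -
  have unique: "k = k'" if "x - k *\<^sub>R g \<in> W" "x - k' *\<^sub>R g \<in> W" for x k k'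
  proof (rule ccontr)
    assume "k \<noteq> k'"
    have "(x - k *\<^sub>R g) - (x - k' *\<^sub>R g) \<in> W" using that sub subspace_diff by blast
    moreover have "(x - k *\<^sub>R g) - (x - k' *\<^sub>R g) = (k' - k) *\<^sub>R g" by (simp add: algebra_simps)
    ultimately have "(k' - k) *\<^sub>R g \<in> W" by simp
    then have "(1 / (k' - k)) *\<^sub>R ((k' - k) *\<^sub>R g) \<in> W" by (rule subspace_scale[OF sub])
    then show False using g \<open>k \<noteq> k'\<close> by simp
  qed
  define \<psi> where "\<psi> x = (THE k. x - k *\<^sub>R g \<in> W)" for x
  have "x - \<psi> x *\<^sub>R g \<in> W" for x
    unfolding \<psi>_def using spans[of x] unique by (metis theI)
  then have \<psi>: "x - k *\<^sub>R g \<in> W \<longleftrightarrow> \<psi> x = k" for x k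
    using unique by blast
  have "linear \<psi>"
  proof
    fix x y
    have "(x - \<psi> x *\<^sub>R g) + (y - \<psi> y *\<^sub>R g) \<in> W" using \<psi> sub subspace_add by blast
    then have "(x + y) - (\<psi> x + \<psi> y) *\<^sub>R g \<in> W" by (simp add: algebra_simps)
    then show "\<psi> (x + y) = \<psi> x + \<psi> y" using \<psi> by blast
  next
    fix c x
    have "c *\<^sub>R (x - \<psi> x *\<^sub>R g) \<in> W" using \<psi> sub subspace_scale by blast
    then have "c *\<^sub>R x - (c * \<psi> x) *\<^sub>R g \<in> W" by (simp add: algebra_simps)
    then show "\<psi> (c *\<^sub>R x) = c *\<^sub>R \<psi> x" using \<psi> by simp
  qed
  moreover have "{x. \<psi> x = 0} = W" using \<psi>[of _ 0] by auto
  then have "closed {x. \<psi> x = 0}" using cl by simp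
  ultimately have "bounded_linear \<psi>" by (rule bounded_linear_closed_kernel)
  then show ?thesis using \<psi> by blast
qed

lemma span_Un_minimal_finite:
  assumes "finite F" "span (Z \<union> F) = UNIV"
  obtains G where "finite G" "span (Z \<union> G) = UNIV" "\<And>g. g \<in> G \<Longrightarrow> g \<notin> span (Z \<union> (G - {g}))"
proof -
  obtain G where G: "G \<subseteq> F \<and> span (Z \<union> G) = UNIV"
    and min: "\<And>G'. G' \<subseteq> F \<and> span (Z \<union> G') = UNIV \<Longrightarrow> card G \<le> card G'"
    using ex_has_least_nat[of "\<lambda>G. G \<subseteq> F \<and> span (Z \<union> G) = UNIV" F card] assms by blast
  have "finite G" using G assms(1) finite_subset by blast
  have "g \<notin> span (Z \<union> (G - {g}))" if "g \<in> G" for g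
  proof
    assume "g \<in> span (Z \<union> (G - {g}))"
    moreover have "Z \<union> (G - {g}) \<subseteq> span (Z \<union> (G - {g}))" by (rule span_superset)
    ultimately have "Z \<union> G \<subseteq> span (Z \<union> (G - {g}))" by blast
    then have "span (Z \<union> (G - {g})) = UNIV" using G span_minimal[OF _ subspace_span] by blast
    then have "card G \<le> card (G - {g})" using min G by blast
    then show False using card_Diff1_less[OF \<open>finite G\<close> that] by simp
  qed
  then show ?thesis using that \<open>finite G\<close> G by blast
qed

text \<open>For a minimal finite complement \<open>G\<close>, the coefficient of \<open>g \<in> G\<close> is a linear functional whose
  kernel \<open>span (Z \<union> (G - {g}))\<close> is closed, hence it is bounded.\<close>
lemma fin_codim_closed_subspace_decomposition:
  fixes Z :: "'a::banach set"
  assumes "fin_codim_closed_subspace Z"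
  obtains G \<psi> where "finite G" "\<And>g. g \<in> G \<Longrightarrow> bounded_linear (\<psi> g)"
    "\<And>x. x - (\<Sum>g\<in>G. \<psi> g x *\<^sub>R g) \<in> Z"
proof -
  have sub: "subspace Z" and cl: "closed Z" and "\<exists>F. finite F \<and> span (Z \<union> F) = UNIV"
    using assms unfolding fin_codim_closed_subspace_def by auto
  then obtain F where F: "finite F" "span (Z \<union> F) = UNIV" by blast
  obtain G where finG: "finite G" and G: "span (Z \<union> G) = UNIV"
    and g_notin: "\<And>g. g \<in> G \<Longrightarrow> g \<notin> span (Z \<union> (G - {g}))"
    using span_Un_minimal_finite[OF F] by blast
  define W where "W g = span (Z \<union> (G - {g}))" for g
  have Z_W: "Z \<subseteq> W g" for g unfolding W_def by (meson Un_subset_iff span_superset)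
  have G_W: "v \<in> W g" if "v \<in> G - {g}" for v g unfolding W_def using that by (intro span_base) blast
  have spans: "span (insert g (W g)) = UNIV" if "g \<in> G" for g
  proof -
    have "Z \<union> G \<subseteq> span (insert g (W g))"
      using Z_W[of g] G_W[of _ g] that span_superset[of "insert g (W g)"] by blast
    then show ?thesis using G span_minimal[OF _ subspace_span] by blast
  qed
  have "\<forall>g\<in>G. \<exists>\<psi>. bounded_linear \<psi> \<and> (\<forall>x k. x - k *\<^sub>R g \<in> W g \<longleftrightarrow> \<psi> x = k)"
  proof
    fix g assume "g \<in> G"
    show "\<exists>\<psi>. bounded_linear \<psi> \<and> (\<forall>x k. x - k *\<^sub>R g \<in> W g \<longleftrightarrow> \<psi> x = k)"
    proof (rule coordinate_functional_exists)
      show "closed (W g)" unfolding W_def using closed_span_Un_finite[OF cl sub] finG by simp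
      show "\<exists>k. x - k *\<^sub>R g \<in> W g" for x
        using spans[OF \<open>g \<in> G\<close>] span_insert[of g "W g"] by (auto simp: W_def span_span)
    qed (use g_notin[OF \<open>g \<in> G\<close>] in \<open>simp_all add: W_def\<close>)
  qed
  then obtain \<psi> where \<psi>: "\<forall>g\<in>G. bounded_linear (\<psi> g) \<and> (\<forall>x k. x - k *\<^sub>R g \<in> W g \<longleftrightarrow> \<psi> g x = k)"
    by (rule bchoice[elim_format]) blast
  have "x - (\<Sum>g\<in>G. \<psi> g x *\<^sub>R g) \<in> Z" for x
  proof -
    have "x \<in> span (Z \<union> G)" using G by auto
    then obtain z v where zv: "x = z + v" "z \<in> span Z" "v \<in> span G" using span_Un[of Z G] by blast
    obtain c where c: "v = (\<Sum>h\<in>G. c h *\<^sub>R h)" using zv(3) span_finite[OF finG] by auto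
    have "span Z = Z" using sub by simp
    then have "z \<in> Z" using zv(2) by (simp del: span_eq_iff)
    have "\<psi> g x = c g" if g: "g \<in> G" for g
    proof -
      have "x - c g *\<^sub>R g = z + (\<Sum>h\<in>G - {g}. c h *\<^sub>R h)" using zv c finG g by (simp add: sum.remove)
      moreover have "(\<Sum>h\<in>G - {g}. c h *\<^sub>R h) \<in> W g"
        using G_W by (intro subspace_sum) (auto simp: W_def intro: subspace_scale)
      moreover have "z \<in> W g" using \<open>z \<in> Z\<close> Z_W by blast
      ultimately have "x - c g *\<^sub>R g \<in> W g" unfolding W_def by (simp add: span_add)
      then show ?thesis using \<psi> g by blast
    qed
    then show ?thesis using zv c \<open>z \<in> Z\<close> by simp
  qed
  then show ?thesis using that finG \<psi> by blast
qed

lemma weakly_null_eventually_near_subspace: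
  fixes y :: "nat \<Rightarrow> 'a::banach"
  assumes "fin_codim_closed_subspace Z" "weakly_null y" "\<delta> > 0"
  shows "eventually (\<lambda>m. \<exists>z\<in>Z. norm (y m - z) < \<delta>) sequentially"
proof -
  obtain G \<psi> where G: "finite G" and bl: "\<And>g. g \<in> G \<Longrightarrow> bounded_linear (\<psi> g)"
    and decomp: "\<And>x. x - (\<Sum>g\<in>G. \<psi> g x *\<^sub>R g) \<in> Z"
    using fin_codim_closed_subspace_decomposition[OF assms(1)] by blast
  have "(\<lambda>m. \<bar>\<psi> g (y m)\<bar> * norm g) \<longlonglongrightarrow> 0" if "g \<in> G" for g
    using \<open>weakly_null y\<close> bl[OF that] unfolding weakly_null_def
    by (intro tendsto_mult_left_zero tendsto_rabs_zero) blast
  then have "(\<lambda>m. \<Sum>g\<in>G. \<bar>\<psi> g (y m)\<bar> * norm g) \<longlonglongrightarrow> 0"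
    using tendsto_sum[of G "\<lambda>g m. \<bar>\<psi> g (y m)\<bar> * norm g" "\<lambda>_. 0"] by simp
  then have "eventually (\<lambda>m. (\<Sum>g\<in>G. \<bar>\<psi> g (y m)\<bar> * norm g) < \<delta>) sequentially"
    using order_tendstoD(2) \<open>\<delta> > 0\<close> by blast
  then show ?thesis
  proof (rule eventually_mono)
    fix m assume "(\<Sum>g\<in>G. \<bar>\<psi> g (y m)\<bar> * norm g) < \<delta>"
    moreover have "norm (\<Sum>g\<in>G. \<psi> g (y m) *\<^sub>R g) \<le> (\<Sum>g\<in>G. \<bar>\<psi> g (y m)\<bar> * norm g)"
      using norm_sum[of "\<lambda>g. \<psi> g (y m) *\<^sub>R g" G] by simp
    ultimately show "\<exists>z\<in>Z. norm (y m - z) < \<delta>"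
      using decomp[of "y m"] by (intro bexI[of _ "y m - (\<Sum>g\<in>G. \<psi> g (y m) *\<^sub>R g)"]) auto
  qed
qed

lemma norm_le_limit_add_weakly_null:
  fixes x :: "nat \<Rightarrow> 'a::real_normed_vector"
  assumes "weakly_null x" "F \<noteq> bot" "F \<le> sequentially"
    and lim: "((\<lambda>m. norm (u + t *\<^sub>R x m)) \<longlongrightarrow> l) F"
  shows "norm u \<le> l"
proof -
  obtain \<phi> where \<phi>: "bounded_linear \<phi>" "\<phi> u = norm u" "\<And>v. \<bar>\<phi> v\<bar> \<le> norm v"
    using norming_functional[of u] by blast
  interpret bounded_linear \<phi> by fact
  have "(\<lambda>m. \<phi> (x m)) \<longlonglongrightarrow> 0" using assms(1) \<phi>(1) unfolding weakly_null_def by blast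
  then have "((\<lambda>m. norm u + t * \<phi> (x m)) \<longlongrightarrow> norm u + t * 0) F"
    by (intro tendsto_intros tendsto_mono[OF \<open>F \<le> sequentially\<close>])
  moreover have "norm u + t * \<phi> (x m) \<le> norm (u + t *\<^sub>R x m)" for m
    using \<phi>(3)[of "u + t *\<^sub>R x m"] by (simp add: add scale \<phi>(2))
  ultimately show ?thesis using tendsto_le[OF \<open>F \<noteq> bot\<close> lim] by simp
qed

lemma unit_vector_near:
  fixes y z :: "'a::real_normed_vector"
  assumes "subspace Z" "z \<in> Z" "norm y = 1" "norm (y - z) < r" "r \<le> 1"
  shows "\<exists>v\<in>Z. norm v = 1 \<and> norm (v - y) < 2 * r"
proof -
  have "\<bar>norm y - norm z\<bar> \<le> norm (y - z)" by (rule norm_triangle_ineq3)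
  then have close: "\<bar>1 - norm z\<bar> < r" using assms(3,4) by simp
  then have "norm z > 0" using assms(5) by linarith
  define v where "v = (1 / norm z) *\<^sub>R z"
  have "v - z = (1 / norm z - 1) *\<^sub>R z" unfolding v_def by (simp add: algebra_simps)
  then have "norm (v - z) = \<bar>(1 / norm z - 1) * norm z\<bar>" by (simp add: abs_mult)
  also have "(1 / norm z - 1) * norm z = 1 - norm z" using \<open>norm z > 0\<close> by (simp add: field_simps)
  finally have "norm (v - z) = \<bar>1 - norm z\<bar>" .
  moreover have "norm (v - y) \<le> norm (v - z) + norm (y - z)"
    using norm_triangle_ineq4[of "v - z" "y - z"] by simp
  ultimately have "norm (v - y) < 2 * r" using close assms(4) by linarith
  moreover have "v \<in> Z" unfolding v_def using assms(1,2) by (rule subspace_scale)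
  moreover have "norm v = 1" unfolding v_def using \<open>norm z > 0\<close> by simp
  ultimately show ?thesis by blast
qed

section \<open>The asymptotic model of a normalized weakly null array\<close>

lemma C_equiv_of_relative_error:
  assumes "0 \<le> \<theta>" "\<theta> < 1" "(1 + \<theta>) / (1 - \<theta>) \<le> C"
    and err: "\<And>a. supp_in n a \<Longrightarrow> \<bar>p a - q a\<bar> \<le> \<theta> * q a"
  shows "C_equiv n C p q"
  unfolding C_equiv_def
proof (intro exI conjI allI)
  show "0 < 1 + \<theta>" "0 < 1 / (1 - \<theta>)" "(1 + \<theta>) * (1 / (1 - \<theta>)) \<le> C" using assms(1-3) by auto
  fix a
  define b where "b = (\<lambda>i. if i < n then a i else (0::real))"
  have "supp_in n b" by (simp add: supp_in_def b_def)
  from err[OF this] have "\<bar>p b - q b\<bar> \<le> \<theta> * q b" .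
  then show "1 / (1 + \<theta>) * p b \<le> q b" "q b \<le> 1 / (1 - \<theta>) * p b"
    using assms(1,2) by (auto simp: field_simps abs_le_iff)
qed

lemma finite_coefficient_net:
  fixes N M :: nat
  assumes "M > 0"
  shows "\<exists>G. finite G \<and> (\<forall>a. (\<forall>i<N. \<bar>a i\<bar> \<le> 1) \<longrightarrow> (\<exists>b\<in>G. \<forall>i<N. \<bar>a i - b i\<bar> \<le> 1 / real M))"
proof (intro exI conjI allI impI)
  define R where "R = (\<lambda>z. real_of_int z / real M) ` {- int M..int M}"
  show "finite {b. \<forall>i. (i \<in> {..<N} \<longrightarrow> b i \<in> R) \<and> (i \<notin> {..<N} \<longrightarrow> b i = 0)}"
    unfolding R_def by (rule finite_set_of_finite_funs) auto
  fix a :: "nat \<Rightarrow> real" assume a: "\<forall>i<N. \<bar>a i\<bar> \<le> 1"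
  define b where "b i = (if i < N then real_of_int \<lfloor>a i * real M\<rfloor> / real M else 0)" for i
  have M: "real M > 0" using assms by simp
  have "b i \<in> R" if i: "i < N" for i
  proof -
    have "- 1 \<le> a i" "a i \<le> 1" using a i by (simp_all add: abs_le_iff)
    then have "- 1 * real M \<le> a i * real M" "a i * real M \<le> 1 * real M"
      by (simp_all only: mult_right_mono of_nat_0_le_iff)
    then have "- int M \<le> \<lfloor>a i * real M\<rfloor>" "\<lfloor>a i * real M\<rfloor> \<le> int M"
      by (simp_all add: le_floor_iff floor_le_iff)
    then show ?thesis unfolding R_def b_def using i by auto
  qed
  moreover have "\<bar>a i - b i\<bar> \<le> 1 / real M" if "i < N" for i
  proof -
    have "a i - b i = (a i * real M - real_of_int \<lfloor>a i * real M\<rfloor>) / real M"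
      unfolding b_def using that M by (simp add: field_simps)
    moreover have "0 \<le> a i * real M - real_of_int \<lfloor>a i * real M\<rfloor>" "a i * real M - real_of_int \<lfloor>a i * real M\<rfloor> \<le> 1"
      by linarith+
    ultimately show ?thesis using M by (simp add: divide_le_cancel)
  qed
  ultimately show "\<exists>b\<in>{b. \<forall>i. (i \<in> {..<N} \<longrightarrow> b i \<in> R) \<and> (i \<notin> {..<N} \<longrightarrow> b i = 0)}.
      \<forall>i<N. \<bar>a i - b i\<bar> \<le> 1 / real M"
    by (intro bexI[of _ b]) (auto simp: b_def)
qed

lemma strict_mono_on_lessThan_extend:
  fixes a :: "nat \<Rightarrow> nat"
  assumes "strict_mono_on {..<k} a" "\<And>i. i < k \<Longrightarrow> a i < m"
  shows "strict_mono_on {..<Suc k} (a(k := m))"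
  using assms by (auto simp: strict_mono_on_def less_Suc_eq)

locale asymptotic_model =
  fixes U :: "nat filter" and N :: nat and y :: "nat \<Rightarrow> nat \<Rightarrow> 'a::banach"
  assumes ultrafilter: "is_ultrafilter U" and U_le_sequentially: "U \<le> sequentially"
    and N_pos: "N > 0"
    and norm_y: "\<And>i m. i < N \<Longrightarrow> norm (y i m) = 1"
    and weakly_null_y: "\<And>i. i < N \<Longrightarrow> weakly_null (y i)"
begin

lemma U_ne_bot: "U \<noteq> bot"
  using ultrafilter by (simp add: is_ultrafilter_def)

lemma Lim_U_const [simp]: "Lim U (\<lambda>_. c) = c"
  using tendsto_Lim[OF U_ne_bot tendsto_const] .

lemma eventually_U_large: "eventually P U \<Longrightarrow> \<exists>m>K. P m"
  using eventually_happens'[OF U_ne_bot] filter_leD[OF U_le_sequentially eventually_gt_at_top]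
    eventually_conj by (metis (mono_tags, lifting))

text \<open>\<open>tail_norm j a u\<close> is the iterated \<open>U\<close>-limit of \<open>\<parallel>u + \<Sum>i\<in>{N - j..<N}. a i *\<^sub>R y i (m i)\<parallel>\<close>
  as \<open>m (N - j), \<dots>, m (N - 1)\<close> tend to infinity in turn, so \<open>model_norm\<close> is the norm \<open>E\<close>
  of the asymptotic model.\<close>
primrec tail_norm :: "nat \<Rightarrow> (nat \<Rightarrow> real) \<Rightarrow> 'a \<Rightarrow> real" where
  "tail_norm 0 a u = norm u"
| "tail_norm (Suc j) a u = Lim U (\<lambda>m. tail_norm j a (u + a (N - Suc j) *\<^sub>R y (N - Suc j) m))"

definition model_norm :: "(nat \<Rightarrow> real) \<Rightarrow> real" where
  "model_norm a = tail_norm N a 0"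

definition l1_dist :: "(nat \<Rightarrow> real) \<Rightarrow> (nat \<Rightarrow> real) \<Rightarrow> real" where
  "l1_dist a b = (\<Sum>i<N. \<bar>a i - b i\<bar>)"

lemma l1_dist_nonneg: "0 \<le> l1_dist a b"
  unfolding l1_dist_def by (simp add: sum_nonneg)

lemma abs_diff_le_l1_dist: "i < N \<Longrightarrow> \<bar>a i - b i\<bar> \<le> l1_dist a b"
  unfolding l1_dist_def by (rule member_le_sum) auto

lemma tail_norm_zero: "tail_norm j (\<lambda>_. 0) 0 = 0"
  by (induction j) simp_all

lemma norm_add_scaleR_y_le: "i < N \<Longrightarrow> norm (w + t *\<^sub>R y i m) \<le> norm w + \<bar>t\<bar>"
  using norm_triangle_ineq[of w "t *\<^sub>R y i m"] norm_y by simp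

lemma tail_norm_lipschitz: "\<bar>tail_norm j a u - tail_norm j b v\<bar> \<le> norm (u - v) + real j * l1_dist a b"
proof (induction j arbitrary: u v a b)
  case 0
  then show ?case by (simp add: norm_triangle_ineq3)
next
  case (Suc j)
  define i where "i = N - Suc j"
  have i: "i < N" unfolding i_def using N_pos by simp
  have tendsto: "((\<lambda>m. tail_norm j c (w + c i *\<^sub>R y i m)) \<longlongrightarrow> tail_norm (Suc j) c w) U" for c w
  proof -
    have "\<bar>tail_norm j c (w + c i *\<^sub>R y i m)\<bar> \<le> norm w + \<bar>c i\<bar> + real j * l1_dist c (\<lambda>_. 0)" for m
      using Suc.IH[of c "w + c i *\<^sub>R y i m" "\<lambda>_. 0" 0] norm_add_scaleR_y_le[OF i, of w "c i" m]
      by (simp add: tail_norm_zero)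
    then have "Bfun (\<lambda>m. tail_norm j c (w + c i *\<^sub>R y i m)) U"
      by (intro BfunI always_eventually) auto
    then show ?thesis unfolding i_def tail_norm.simps by (rule ultrafilter_Bfun_tendsto_Lim[OF ultrafilter])
  qed
  have "\<bar>tail_norm j a (u + a i *\<^sub>R y i m) - tail_norm j b (v + b i *\<^sub>R y i m)\<bar>
      \<le> norm (u - v) + real (Suc j) * l1_dist a b" for m
  proof -
    have "(u + a i *\<^sub>R y i m) - (v + b i *\<^sub>R y i m) = (u - v) + (a i - b i) *\<^sub>R y i m"
      by (simp add: algebra_simps)
    then have "\<bar>tail_norm j a (u + a i *\<^sub>R y i m) - tail_norm j b (v + b i *\<^sub>R y i m)\<bar>
        \<le> norm ((u - v) + (a i - b i) *\<^sub>R y i m) + real j * l1_dist a b"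
      using Suc.IH by metis
    also have "norm ((u - v) + (a i - b i) *\<^sub>R y i m) \<le> norm (u - v) + l1_dist a b"
      using norm_add_scaleR_y_le[OF i] abs_diff_le_l1_dist[OF i, of a b] by (meson add_left_mono order_trans)
    finally show ?thesis by (simp add: algebra_simps)
  qed
  then show ?case
    using tendsto_le[OF U_ne_bot tendsto_const tendsto_rabs[OF tendsto_diff[OF tendsto tendsto]]]
    by (simp add: always_eventually)
qed

lemma tail_norm_Suc_tendsto:
  "((\<lambda>m. tail_norm j a (u + a (N - Suc j) *\<^sub>R y (N - Suc j) m)) \<longlongrightarrow> tail_norm (Suc j) a u) U"
proof -
  define i where "i = N - Suc j"
  have i: "i < N" unfolding i_def using N_pos by simp
  have "\<bar>tail_norm j a (u + a i *\<^sub>R y i m)\<bar> \<le> norm u + \<bar>a i\<bar> + real j * l1_dist a (\<lambda>_. 0)" for m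
    using tail_norm_lipschitz[of j a "u + a i *\<^sub>R y i m" "\<lambda>_. 0" 0] norm_add_scaleR_y_le[OF i, of u "a i" m]
    by (simp add: tail_norm_zero)
  then have "Bfun (\<lambda>m. tail_norm j a (u + a i *\<^sub>R y i m)) U"
    by (intro BfunI always_eventually) auto
  then show ?thesis unfolding i_def tail_norm.simps by (rule ultrafilter_Bfun_tendsto_Lim[OF ultrafilter])
qed

lemma tail_norm_SucI:
  assumes "((\<lambda>m. tail_norm j a (u + a (N - Suc j) *\<^sub>R y (N - Suc j) m)) \<longlongrightarrow> l) U"
  shows "tail_norm (Suc j) a u = l"
  using tendsto_unique[OF U_ne_bot tail_norm_Suc_tendsto assms] .

lemma tail_norm_Suc_le:
  assumes "\<And>m. f m \<le> tail_norm j a (u + a (N - Suc j) *\<^sub>R y (N - Suc j) m)" "(f \<longlongrightarrow> l) U"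
  shows "l \<le> tail_norm (Suc j) a u"
  using tendsto_le[OF U_ne_bot tail_norm_Suc_tendsto assms(2)] assms(1) by (simp add: always_eventually)

lemma tail_norm_Suc_ge:
  assumes "\<And>m. tail_norm j a (u + a (N - Suc j) *\<^sub>R y (N - Suc j) m) \<le> f m" "(f \<longlongrightarrow> l) U"
  shows "tail_norm (Suc j) a u \<le> l"
  using tendsto_le[OF U_ne_bot assms(2) tail_norm_Suc_tendsto] assms(1) by (simp add: always_eventually)

lemma tail_norm_nonneg: "0 \<le> tail_norm j a u"
proof (induction j arbitrary: u)
  case (Suc j)
  then show ?case by (intro tail_norm_Suc_le[OF _ tendsto_const])
qed simp

lemma tail_norm_scale: "tail_norm j (\<lambda>i. c * a i) (c *\<^sub>R u) = \<bar>c\<bar> * tail_norm j a u"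
proof (induction j arbitrary: u)
  case (Suc j)
  have "((\<lambda>m. \<bar>c\<bar> * tail_norm j a (u + a (N - Suc j) *\<^sub>R y (N - Suc j) m))
      \<longlongrightarrow> \<bar>c\<bar> * tail_norm (Suc j) a u) U"
    by (intro tendsto_mult_left tail_norm_Suc_tendsto)
  then show ?case
    by (intro tail_norm_SucI) (simp add: Suc.IH[symmetric] algebra_simps)
qed simp

lemma tail_norm_triangle: "tail_norm j (\<lambda>i. a i + b i) (u + v) \<le> tail_norm j a u + tail_norm j b v"
proof (induction j arbitrary: u v)
  case 0
  then show ?case by (simp add: norm_triangle_ineq)
next
  case (Suc j)
  define i where "i = N - Suc j"
  have "tail_norm j (\<lambda>i. a i + b i) (u + v + (a i + b i) *\<^sub>R y i m)
      \<le> tail_norm j a (u + a i *\<^sub>R y i m) + tail_norm j b (v + b i *\<^sub>R y i m)" for m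
    using Suc.IH[of "u + a i *\<^sub>R y i m" "v + b i *\<^sub>R y i m"] by (simp add: algebra_simps)
  then show ?case
    unfolding i_def by (intro tail_norm_Suc_ge[OF _ tendsto_add[OF tail_norm_Suc_tendsto tail_norm_Suc_tendsto]]) simp
qed

lemma norm_le_tail_norm: "norm u \<le> tail_norm j a u"
proof (induction j arbitrary: u)
  case (Suc j)
  define i where "i = N - Suc j"
  have i: "i < N" unfolding i_def using N_pos by simp
  have "Bfun (\<lambda>m. norm (u + a i *\<^sub>R y i m)) U"
    using norm_add_scaleR_y_le[OF i] by (intro BfunI always_eventually) auto
  then have lim: "((\<lambda>m. norm (u + a i *\<^sub>R y i m)) \<longlongrightarrow> Lim U (\<lambda>m. norm (u + a i *\<^sub>R y i m))) U"
    by (rule ultrafilter_Bfun_tendsto_Lim[OF ultrafilter])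
  have "norm u \<le> Lim U (\<lambda>m. norm (u + a i *\<^sub>R y i m))"
    by (rule norm_le_limit_add_weakly_null[OF weakly_null_y[OF i] U_ne_bot U_le_sequentially lim])
  also have "\<dots> \<le> tail_norm (Suc j) a u"
    using lim Suc.IH unfolding i_def by (intro tail_norm_Suc_le) auto
  finally show ?case .
qed simp

lemma tail_norm_vanishing_tail:
  assumes "\<And>i. N - j \<le> i \<Longrightarrow> a i = 0"
  shows "tail_norm j a u = norm u"
  using assms by (induction j arbitrary: u) simp_all

lemma tail_norm_truncate_mono:
  assumes "k \<le> l"
  shows "tail_norm j (\<lambda>i. if i < k then a i else 0) u \<le> tail_norm j (\<lambda>i. if i < l then a i else 0) u"
proof (induction j arbitrary: u)
  case 0
  then show ?case by simp
next
  case (Suc j)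
  show ?case
  proof (cases "N - Suc j < k")
    case True
    then show ?thesis using \<open>k \<le> l\<close> Suc.IH
      by (intro tail_norm_Suc_le[OF _ tail_norm_Suc_tendsto]) auto
  next
    case False
    then have "tail_norm (Suc j) (\<lambda>i. if i < k then a i else 0) u = norm u"
      by (intro tail_norm_vanishing_tail) auto
    then show ?thesis using norm_le_tail_norm[of u "Suc j" "\<lambda>i. if i < l then a i else 0"] by linarith
  qed
qed

lemma tail_norm_vanishing_head:
  assumes "j + d \<le> N" "\<And>i. N - (j + d) \<le> i \<Longrightarrow> i < N - j \<Longrightarrow> a i = 0"
  shows "tail_norm (j + d) a u = tail_norm j a u"
  using assms by (induction d arbitrary: u) auto

lemma model_norm_unit_vec:
  assumes "j < N"
  shows "model_norm (unit_vec j) = 1"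
proof -
  define k where "k = N - Suc j"
  have "N = Suc k + j" "N - Suc k = j" using assms by (simp_all add: k_def)
  then have "model_norm (unit_vec j) = tail_norm (Suc k) (unit_vec j) 0"
    unfolding model_norm_def using tail_norm_vanishing_head[of "Suc k" j "unit_vec j" 0]
    by (simp add: unit_vec_def)
  also have "\<dots> = 1"
  proof (rule tail_norm_SucI)
    have "tail_norm k (unit_vec j) v = norm v" for v
      by (rule tail_norm_vanishing_tail) (use \<open>N = Suc k + j\<close> in \<open>auto simp: unit_vec_def\<close>)
    then have "tail_norm k (unit_vec j) (0 + unit_vec j (N - Suc k) *\<^sub>R y (N - Suc k) m) = 1" for m
      using norm_y[OF assms] \<open>N - Suc k = j\<close> by (simp add: unit_vec_def)
    then show "((\<lambda>m. tail_norm k (unit_vec j) (0 + unit_vec j (N - Suc k) *\<^sub>R y (N - Suc k) m)) \<longlongrightarrow> 1) U"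
      by simp
  qed
  finally show ?thesis .
qed

lemma abs_coeff_le_model_norm:
  assumes "supp_in N a" "i < N"
  shows "\<bar>a i\<bar> \<le> 2 * model_norm a"
proof -
  define trunc where "trunc k = (\<lambda>l. if l < k then a l else 0)" for k
  have trunc_N: "trunc N = a" using assms(1) by (auto simp: trunc_def supp_in_def fun_eq_iff not_less)
  have E_trunc: "model_norm (trunc k) \<le> model_norm a" if "k \<le> N" for k
    using tail_norm_truncate_mono[OF that] trunc_N unfolding model_norm_def trunc_def by metis
  have "(\<lambda>l. a i * unit_vec i l) = (\<lambda>l. trunc (Suc i) l + (- 1) * trunc i l)"
    by (auto simp: trunc_def unit_vec_def fun_eq_iff less_Suc_eq)
  then have "\<bar>a i\<bar> = model_norm (\<lambda>l. trunc (Suc i) l + (- 1) * trunc i l)"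
    using tail_norm_scale[of N "a i" "unit_vec i" 0] model_norm_unit_vec[OF assms(2)]
    by (simp add: model_norm_def)
  also have "\<dots> \<le> model_norm (trunc (Suc i)) + model_norm (trunc i)"
    using tail_norm_triangle[of N "trunc (Suc i)" "\<lambda>l. (- 1) * trunc i l" 0 0]
      tail_norm_scale[of N "- 1" "trunc i" 0] by (simp add: model_norm_def)
  also have "\<dots> \<le> 2 * model_norm a" using E_trunc[of "Suc i"] E_trunc[of i] assms(2) by simp
  finally show ?thesis .
qed

lemma l1_dist_le_model_norm: "supp_in N a \<Longrightarrow> l1_dist a (\<lambda>_. 0) \<le> 2 * real N * model_norm a"
  using sum_mono[of "{..<N}" "\<lambda>i. \<bar>a i\<bar>" "\<lambda>_. 2 * model_norm a"] abs_coeff_le_model_norm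
  by (simp add: l1_dist_def)

lemma normalized_monotone_model_norm: "normalized_monotone_norm N model_norm"
  unfolding normalized_monotone_norm_def is_norm_on_def
proof (intro conjI allI impI)
  fix a assume "supp_in N a"
  show "0 \<le> model_norm a" by (simp add: model_norm_def tail_norm_nonneg)
  show "model_norm a = 0 \<longleftrightarrow> a = (\<lambda>_. 0)"
  proof
    assume "model_norm a = 0"
    then have "a i = 0" for i
      using abs_coeff_le_model_norm[OF \<open>supp_in N a\<close>, of i] \<open>supp_in N a\<close>
      by (cases "i < N") (auto simp: supp_in_def)
    then show "a = (\<lambda>_. 0)" by auto
  qed (simp add: model_norm_def tail_norm_zero)
next
  fix a b c
  show "model_norm (\<lambda>i. c * a i) = \<bar>c\<bar> * model_norm a"
    using tail_norm_scale[of N c a 0] by (simp add: model_norm_def)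
  show "model_norm (\<lambda>i. a i + b i) \<le> model_norm a + model_norm b"
    using tail_norm_triangle[of N a b 0 0] by (simp add: model_norm_def)
next
  fix j assume "j < N"
  then show "model_norm (unit_vec j) = 1" by (rule model_norm_unit_vec)
next
  fix a :: "nat \<Rightarrow> real" and m n :: nat
  assume "supp_in N a" "m \<le> n" "n \<le> N"
  from \<open>m \<le> n\<close> show "model_norm (\<lambda>i. if i < m then a i else 0) \<le> model_norm (\<lambda>i. if i < n then a i else 0)"
    unfolding model_norm_def by (rule tail_norm_truncate_mono)
qed

lemma norm_sum_diff_le_l1_dist:
  assumes "k \<le> N" "\<And>i. i < k \<Longrightarrow> norm (x i) = 1"
  shows "norm ((\<Sum>i<k. a i *\<^sub>R x i) - (\<Sum>i<k. b i *\<^sub>R x i)) \<le> l1_dist a b"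
proof -
  have "norm ((\<Sum>i<k. a i *\<^sub>R x i) - (\<Sum>i<k. b i *\<^sub>R x i)) = norm (\<Sum>i<k. (a i - b i) *\<^sub>R x i)"
    by (simp add: sum_subtractf algebra_simps)
  also have "\<dots> \<le> (\<Sum>i<k. norm ((a i - b i) *\<^sub>R x i))" by (rule norm_sum)
  also have "\<dots> = (\<Sum>i<k. \<bar>a i - b i\<bar>)" using assms(2) by simp
  also have "\<dots> \<le> l1_dist a b" unfolding l1_dist_def using assms(1) by (intro sum_mono2) auto
  finally show ?thesis .
qed

definition tail_increment :: "nat \<Rightarrow> (nat \<Rightarrow> 'a) \<Rightarrow> (nat \<Rightarrow> real) \<Rightarrow> 'a \<Rightarrow> real" where
  "tail_increment k x a v =
     tail_norm (N - Suc k) a ((\<Sum>i<k. a i *\<^sub>R x i) + a k *\<^sub>R v) - tail_norm (N - k) a (\<Sum>i<k. a i *\<^sub>R x i)"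

lemma tail_increment_lipschitz:
  assumes k: "k < N" and x: "\<And>i. i < k \<Longrightarrow> norm (x i) = 1" and "norm v = 1"
  shows "\<bar>tail_increment k x a v - tail_increment k x b v\<bar> \<le> 2 * (real N + 1) * l1_dist a b"
proof -
  define j where "j = N - Suc k"
  have j: "N - k = Suc j" "real j + 2 \<le> real N + 1" using k by (auto simp: j_def)
  define u where "u c = (\<Sum>i<k. c i *\<^sub>R x i)" for c
  have u: "norm (u a - u b) \<le> l1_dist a b"
    unfolding u_def using k x by (intro norm_sum_diff_le_l1_dist) auto
  have "norm ((u a - u b) + (a k - b k) *\<^sub>R v) \<le> 2 * l1_dist a b"
    using norm_triangle_ineq[of "u a - u b" "(a k - b k) *\<^sub>R v"] \<open>norm v = 1\<close> u
      abs_diff_le_l1_dist[OF k, of a b] by simp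
  then have "\<bar>tail_norm j a (u a + a k *\<^sub>R v) - tail_norm j b (u b + b k *\<^sub>R v)\<bar> \<le> (real j + 2) * l1_dist a b"
    using tail_norm_lipschitz[of j a "u a + a k *\<^sub>R v" b "u b + b k *\<^sub>R v"]
    by (simp add: algebra_simps)
  moreover have "\<bar>tail_norm (Suc j) a (u a) - tail_norm (Suc j) b (u b)\<bar> \<le> (real j + 2) * l1_dist a b"
    using tail_norm_lipschitz[of "Suc j" a "u a" b "u b"] u l1_dist_nonneg[of a b]
    by (simp add: algebra_simps)
  moreover have "(real j + 2) * l1_dist a b \<le> (real N + 1) * l1_dist a b"
    using j(2) l1_dist_nonneg[of a b] by (intro mult_right_mono) auto
  ultimately show ?thesis unfolding tail_increment_def j_def[symmetric] j(1) u_def[symmetric] by linarith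
qed

text \<open>Uniformity in the coefficients comes from a finite net of the \<open>\<ell>\<^sub>1\<close>-ball together with the
  Lipschitz continuity of \<open>tail_increment\<close> in the coefficients.\<close>
lemma eventually_tail_increment_small:
  assumes k: "k < N" and x: "\<And>i. i < k \<Longrightarrow> norm (x i) = 1" and "\<delta> > 0"
  shows "eventually (\<lambda>m. \<forall>a. l1_dist a (\<lambda>_. 0) \<le> 1 \<longrightarrow> \<bar>tail_increment k x a (y k m)\<bar> \<le> \<delta>) U"
proof -
  define M :: nat where "M = nat \<lceil>4 * (real N + 1) * real N / \<delta>\<rceil> + 1"
  have "M > 0" unfolding M_def by simp
  have "4 * (real N + 1) * real N / \<delta> \<le> real M" unfolding M_def by linarith
  then have M_err: "2 * (real N + 1) * (real N / real M) \<le> \<delta> / 2"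
    using \<open>M > 0\<close> \<open>\<delta> > 0\<close> by (simp add: field_simps)
  obtain G where "finite G" and net: "\<And>a. \<forall>i<N. \<bar>a i\<bar> \<le> 1 \<Longrightarrow> \<exists>b\<in>G. \<forall>i<N. \<bar>a i - b i\<bar> \<le> 1 / real M"
    using finite_coefficient_net[OF \<open>M > 0\<close>, of N] by blast
  have "Suc (N - Suc k) = N - k" "N - Suc (N - Suc k) = k" using k by auto
  then have "((\<lambda>m. tail_norm (N - Suc k) b ((\<Sum>i<k. b i *\<^sub>R x i) + b k *\<^sub>R y k m))
      \<longlongrightarrow> tail_norm (N - k) b (\<Sum>i<k. b i *\<^sub>R x i)) U" for b
    using tail_norm_Suc_tendsto[of "N - Suc k" b "\<Sum>i<k. b i *\<^sub>R x i"] by (simp only:)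
  then have "((\<lambda>m. tail_increment k x b (y k m)) \<longlongrightarrow>
      tail_norm (N - k) b (\<Sum>i<k. b i *\<^sub>R x i) - tail_norm (N - k) b (\<Sum>i<k. b i *\<^sub>R x i)) U" for b
    unfolding tail_increment_def by (rule tendsto_diff[OF _ tendsto_const])
  then have lim0: "((\<lambda>m. tail_increment k x b (y k m)) \<longlongrightarrow> 0) U" for b by simp
  have "eventually (\<lambda>m. \<bar>tail_increment k x b (y k m)\<bar> < \<delta> / 2) U" for b
    using tendstoD[OF lim0, of "\<delta> / 2"] \<open>\<delta> > 0\<close> by (simp add: dist_real_def)
  then have "eventually (\<lambda>m. \<forall>b\<in>G. \<bar>tail_increment k x b (y k m)\<bar> < \<delta> / 2) U"
    by (intro eventually_ball_finite[OF \<open>finite G\<close>]) blast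
  then show ?thesis
  proof (rule eventually_mono, intro allI impI)
    fix m a
    assume net_close: "\<forall>b\<in>G. \<bar>tail_increment k x b (y k m)\<bar> < \<delta> / 2" and "l1_dist a (\<lambda>_. 0) \<le> 1"
    then have "\<forall>i<N. \<bar>a i\<bar> \<le> 1" using abs_diff_le_l1_dist[of _ a "\<lambda>_. 0"] by force
    then obtain b where "b \<in> G" and b: "\<forall>i<N. \<bar>a i - b i\<bar> \<le> 1 / real M" using net by blast
    have "l1_dist a b \<le> real N / real M"
      using sum_mono[of "{..<N}" "\<lambda>i. \<bar>a i - b i\<bar>" "\<lambda>_. 1 / real M"] b by (simp add: l1_dist_def)
    then have "2 * (real N + 1) * l1_dist a b \<le> 2 * (real N + 1) * (real N / real M)"
      by (intro mult_left_mono) auto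
    moreover have "\<bar>tail_increment k x a (y k m) - tail_increment k x b (y k m)\<bar> \<le> 2 * (real N + 1) * l1_dist a b"
      using tail_increment_lipschitz[where x = x, OF k x norm_y[OF k]] by blast
    moreover have "\<bar>tail_increment k x b (y k m)\<bar> < \<delta> / 2" using net_close \<open>b \<in> G\<close> by blast
    ultimately show "\<bar>tail_increment k x a (y k m)\<bar> \<le> \<delta>" using M_err by linarith
  qed
qed

lemma exists_unit_vector_small_increment:
  assumes k: "k < N" and x: "\<And>i. i < k \<Longrightarrow> norm (x i) = 1"
    and Z: "fin_codim_closed_subspace Z" and "0 < \<delta>" "\<delta> \<le> 1"
  shows "\<exists>v\<in>Z. norm v = 1 \<and> (\<forall>a. l1_dist a (\<lambda>_. 0) \<le> 1 \<longrightarrow> \<bar>tail_increment k x a v\<bar> \<le> \<delta>)"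
proof -
  have "\<delta> / 4 > 0" "\<delta> / 2 > 0" using \<open>0 < \<delta>\<close> by simp_all
  have "eventually (\<lambda>m. \<exists>z\<in>Z. norm (y k m - z) < \<delta> / 4) U"
    using filter_leD[OF U_le_sequentially weakly_null_eventually_near_subspace[OF Z weakly_null_y[OF k] \<open>\<delta> / 4 > 0\<close>]] .
  with eventually_tail_increment_small[where x = x, OF k x \<open>\<delta> / 2 > 0\<close>]
  obtain m where near: "\<forall>a. l1_dist a (\<lambda>_. 0) \<le> 1 \<longrightarrow> \<bar>tail_increment k x a (y k m)\<bar> \<le> \<delta> / 2"
    and "\<exists>z\<in>Z. norm (y k m - z) < \<delta> / 4"
    using eventually_U_large[OF eventually_conj] by blast
  then obtain z where "z \<in> Z" "norm (y k m - z) < \<delta> / 4" by blast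
  then obtain v where "v \<in> Z" "norm v = 1" and v: "norm (v - y k m) < \<delta> / 2"
    using unit_vector_near[of Z z "y k m" "\<delta> / 4"] Z norm_y[OF k] \<open>\<delta> \<le> 1\<close>
    by (auto simp: fin_codim_closed_subspace_def)
  have "\<bar>tail_increment k x a v\<bar> \<le> \<delta>" if "l1_dist a (\<lambda>_. 0) \<le> 1" for a
  proof -
    have "\<bar>a k\<bar> \<le> 1" using abs_diff_le_l1_dist[OF k, of a "\<lambda>_. 0"] that by simp
    then have "\<bar>a k\<bar> * norm (v - y k m) \<le> 1 * (\<delta> / 2)" using v by (intro mult_mono) auto
    moreover have "\<bar>tail_increment k x a v - tail_increment k x a (y k m)\<bar> \<le> \<bar>a k\<bar> * norm (v - y k m)"
      using tail_norm_lipschitz[of "N - Suc k" a "(\<Sum>i<k. a i *\<^sub>R x i) + a k *\<^sub>R v" a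
          "(\<Sum>i<k. a i *\<^sub>R x i) + a k *\<^sub>R y k m"]
      by (simp add: tail_increment_def l1_dist_def scaleR_diff_right[symmetric])
    ultimately show ?thesis using near that by fastforce
  qed
  then show ?thesis using \<open>v \<in> Z\<close> \<open>norm v = 1\<close> by blast
qed

lemma model_norm_relative_error:
  assumes x: "\<And>i. i < N \<Longrightarrow> norm (x i) = 1"
    and err: "\<And>a. supp_in N a \<Longrightarrow> l1_dist a (\<lambda>_. 0) \<le> 1 \<Longrightarrow>
      \<bar>norm (\<Sum>i<N. a i *\<^sub>R x i) - model_norm a\<bar> \<le> \<eta>"
    and a: "supp_in N a"
  shows "\<bar>norm (\<Sum>i<N. a i *\<^sub>R x i) - model_norm a\<bar> \<le> 2 * real N * \<eta> * model_norm a"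
proof -
  have "0 \<le> \<eta>" using err[of "\<lambda>_. 0"] by (simp add: supp_in_def l1_dist_def)
  define s where "s = l1_dist a (\<lambda>_. 0)"
  have "\<bar>norm (\<Sum>i<N. a i *\<^sub>R x i) - model_norm a\<bar> \<le> \<eta> * s"
  proof (cases "s = 0")
    case True
    have "a i = 0" for i
      using a abs_diff_le_l1_dist[of i a "\<lambda>_. 0"] True unfolding s_def supp_in_def
      by (cases "i < N") auto
    then have "a = (\<lambda>_. 0)" by auto
    then show ?thesis using \<open>0 \<le> \<eta>\<close> l1_dist_nonneg by (simp add: s_def model_norm_def tail_norm_zero)
  next
    case False
    then have "s > 0" using l1_dist_nonneg[of a "\<lambda>_. 0"] by (simp add: s_def)
    define a' where "a' i = (1 / s) * a i" for i
    have "supp_in N a'" using a by (simp add: supp_in_def a'_def)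
    moreover have "l1_dist a' (\<lambda>_. 0) = 1"
      using \<open>s > 0\<close> by (simp add: l1_dist_def a'_def abs_mult sum_divide_distrib[symmetric] s_def)
    ultimately have "\<bar>norm (\<Sum>i<N. a' i *\<^sub>R x i) - model_norm a'\<bar> \<le> \<eta>" using err by simp
    moreover have "(\<Sum>i<N. a' i *\<^sub>R x i) = (1 / s) *\<^sub>R (\<Sum>i<N. a i *\<^sub>R x i)"
      by (simp add: a'_def scaleR_sum_right)
    then have "norm (\<Sum>i<N. a' i *\<^sub>R x i) = (1 / s) * norm (\<Sum>i<N. a i *\<^sub>R x i)"
      using \<open>s > 0\<close> by simp
    moreover have "model_norm a' = (1 / s) * model_norm a"
      using tail_norm_scale[of N "1 / s" a 0] \<open>s > 0\<close> unfolding model_norm_def a'_def by simp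
    ultimately have "(1 / s) * \<bar>norm (\<Sum>i<N. a i *\<^sub>R x i) - model_norm a\<bar> \<le> \<eta>"
      using \<open>s > 0\<close> by (simp add: diff_divide_distrib[symmetric])
    then show ?thesis using \<open>s > 0\<close> by (simp add: field_simps)
  qed
  also have "\<dots> \<le> \<eta> * (2 * real N * model_norm a)"
    using l1_dist_le_model_norm[OF a] \<open>0 \<le> \<eta>\<close> by (simp add: s_def mult_left_mono)
  finally show ?thesis by (simp add: algebra_simps)
qed

lemma C_equiv_model_norm:
  assumes "\<epsilon> > 0" and x: "\<And>i. i < N \<Longrightarrow> norm (x i) = 1"
    and err: "\<And>a. supp_in N a \<Longrightarrow> l1_dist a (\<lambda>_. 0) \<le> 1 \<Longrightarrow>
      \<bar>norm (\<Sum>i<N. a i *\<^sub>R x i) - model_norm a\<bar> \<le> \<epsilon> / (2 + \<epsilon>) / (2 * real N)"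
  shows "C_equiv N (1 + \<epsilon>) (vec_norm N x) (\<lambda>a. model_norm (\<lambda>i. if i < N then a i else 0))"
proof -
  define \<theta> where "\<theta> = \<epsilon> / (2 + \<epsilon>)"
  have "0 \<le> \<theta>" "\<theta> < 1" using \<open>\<epsilon> > 0\<close> by (simp_all add: \<theta>_def)
  have "1 + \<theta> = (1 + \<epsilon>) * (1 - \<theta>)" using \<open>\<epsilon> > 0\<close> by (simp add: \<theta>_def field_simps)
  then have "(1 + \<theta>) / (1 - \<theta>) \<le> 1 + \<epsilon>" using \<open>\<theta> < 1\<close> by (simp add: pos_divide_le_eq)
  moreover have "\<bar>vec_norm N x a - model_norm (\<lambda>i. if i < N then a i else 0)\<bar>
      \<le> \<theta> * model_norm (\<lambda>i. if i < N then a i else 0)" if "supp_in N a" for a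
  proof -
    have trunc: "(\<lambda>i. if i < N then a i else 0) = a" using that by (auto simp: supp_in_def fun_eq_iff)
    have eq: "2 * real N * (\<epsilon> / (2 + \<epsilon>) / (2 * real N)) = \<theta>" using N_pos by (simp add: \<theta>_def)
    have "\<bar>norm (\<Sum>i<N. a i *\<^sub>R x i) - model_norm a\<bar> \<le> \<theta> * model_norm a"
      using model_norm_relative_error[where x = x, OF x err that] unfolding eq .
    then show ?thesis unfolding vec_norm_def trunc .
  qed
  ultimately show ?thesis using \<open>0 \<le> \<theta>\<close> \<open>\<theta> < 1\<close> by (intro C_equiv_of_relative_error)
qed

text \<open>The vector player answers each subspace by a unit vector along which \<open>tail_norm\<close> moves
  by at most \<open>\<delta>\<close>; after \<open>N\<close> rounds the chosen vectors realise \<open>model_norm\<close> up to \<open>N \<delta>\<close>.\<close>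
lemma asym_game_model_norm:
  assumes "\<epsilon> > 0" and \<delta>: "\<delta> = \<epsilon> / (2 + \<epsilon>) / (2 * real N) / real N"
  shows "k + r = N \<Longrightarrow> (\<forall>i<k. norm (x i) = 1) \<Longrightarrow>
    (\<forall>a. supp_in N a \<longrightarrow> l1_dist a (\<lambda>_. 0) \<le> 1 \<longrightarrow>
      \<bar>tail_norm (N - k) a (\<Sum>i<k. a i *\<^sub>R x i) - model_norm a\<bar> \<le> real k * \<delta>) \<Longrightarrow>
    asym_game (\<lambda>x. C_equiv N (1 + \<epsilon>) (vec_norm N x) (\<lambda>a. model_norm (\<lambda>i. if i < N then a i else 0))) r k x"
proof (induction r arbitrary: k x)
  case 0
  moreover have "real N * \<delta> = \<epsilon> / (2 + \<epsilon>) / (2 * real N)" using N_pos by (simp add: \<delta>)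
  ultimately show ?case using C_equiv_model_norm[OF \<open>\<epsilon> > 0\<close>, of x] by simp
next
  case (Suc r)
  have k: "k < N" using Suc.prems by simp
  have "0 < \<delta>" using \<open>\<epsilon> > 0\<close> N_pos by (simp add: \<delta>)
  have "1 \<le> 2 * real N * real N" using N_pos by (simp add: Suc_le_eq mult_ge1_I)
  then have "\<delta> * 1 \<le> \<delta> * (2 * real N * real N)" using \<open>0 < \<delta>\<close> by (intro mult_left_mono) auto
  also have "\<dots> = \<epsilon> / (2 + \<epsilon>)" using N_pos by (simp add: \<delta>)
  finally have "\<delta> \<le> \<epsilon> / (2 + \<epsilon>)" by simp
  moreover have "\<epsilon> / (2 + \<epsilon>) \<le> 1" using \<open>\<epsilon> > 0\<close> by simp
  ultimately have "\<delta> \<le> 1" by linarith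
  show ?case
    unfolding asym_game.simps
  proof (intro allI impI)
    fix Z :: "'a set" assume "fin_codim_closed_subspace Z"
    then obtain v where "v \<in> Z" "norm v = 1"
      and v: "\<forall>a. l1_dist a (\<lambda>_. 0) \<le> 1 \<longrightarrow> \<bar>tail_increment k x a v\<bar> \<le> \<delta>"
      using exists_unit_vector_small_increment[OF k _ _ \<open>0 < \<delta>\<close> \<open>\<delta> \<le> 1\<close>, of x] Suc.prems(2) by blast
    have sum_upd: "(\<Sum>i<Suc k. a i *\<^sub>R (x(k := v)) i) = (\<Sum>i<k. a i *\<^sub>R x i) + a k *\<^sub>R v" for a
      by (simp add: lessThan_Suc_atMost[symmetric])
    have "asym_game (\<lambda>x. C_equiv N (1 + \<epsilon>) (vec_norm N x) (\<lambda>a. model_norm (\<lambda>i. if i < N then a i else 0)))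
        r (Suc k) (x(k := v))"
    proof (rule Suc.IH)
      show "Suc k + r = N" using Suc.prems by simp
      show "\<forall>i<Suc k. norm ((x(k := v)) i) = 1" using Suc.prems(2) \<open>norm v = 1\<close> by (auto simp: less_Suc_eq)
      show "\<forall>a. supp_in N a \<longrightarrow> l1_dist a (\<lambda>_. 0) \<le> 1 \<longrightarrow>
          \<bar>tail_norm (N - Suc k) a (\<Sum>i<Suc k. a i *\<^sub>R (x(k := v)) i) - model_norm a\<bar> \<le> real (Suc k) * \<delta>"
        using v Suc.prems(3) unfolding sum_upd tail_increment_def by (fastforce simp: algebra_simps)
    qed
    then show "\<exists>v\<in>Z. norm v = 1 \<and> asym_game (\<lambda>x. C_equiv N (1 + \<epsilon>) (vec_norm N x)
        (\<lambda>a. model_norm (\<lambda>i. if i < N then a i else 0))) r (Suc k) (x(k := v))"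
      using \<open>v \<in> Z\<close> \<open>norm v = 1\<close> by blast
  qed
qed

lemma model_norm_in_asym_structure: "model_norm \<in> asym_structure TYPE('a) N"
  unfolding asym_structure_def
proof (intro CollectI conjI allI impI normalized_monotone_model_norm)
  fix \<epsilon> :: real assume "\<epsilon> > 0"
  show "asym_game (\<lambda>x::nat \<Rightarrow> 'a. C_equiv N (1 + \<epsilon>) (vec_norm N x)
      (\<lambda>a. model_norm (\<lambda>i. if i < N then a i else 0))) N 0 (\<lambda>_. 0)"
    by (rule asym_game_model_norm[OF \<open>\<epsilon> > 0\<close> refl]) (auto simp: model_norm_def)
qed

text \<open>A strict bound on a \<open>U\<close>-limit persists for \<open>U\<close>-almost all, hence for arbitrarily large,
  values of the next index.\<close>
lemma exists_next_indices:
  assumes "k < N" "tail_norm (N - k) w u < c" "tail_norm (N - k) w u' < c"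
  obtains m m' where "m > K" "m' > K" "m' = m \<longleftrightarrow> w k = 0"
    "tail_norm (N - Suc k) w (u + w k *\<^sub>R y k m) < c" "tail_norm (N - Suc k) w (u' + w k *\<^sub>R y k m') < c"
proof -
  have j: "N - k = Suc (N - Suc k)" "N - Suc (N - Suc k) = k" using assms(1) by auto
  have ev: "eventually (\<lambda>m. tail_norm (N - Suc k) w (v + w k *\<^sub>R y k m) < c) U"
    if "tail_norm (N - k) w v < c" for v
    using order_tendstoD(2)[OF tail_norm_Suc_tendsto that[unfolded j(1)]] unfolding j(2) .
  obtain m where "m > K" and m: "tail_norm (N - Suc k) w (u + w k *\<^sub>R y k m) < c"
    and m': "tail_norm (N - Suc k) w (u' + w k *\<^sub>R y k m) < c"
    using eventually_U_large[OF eventually_conj[OF ev ev, OF assms(2,3)]] by blast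
  show ?thesis
  proof (cases "w k = 0")
    case True
    then show ?thesis using that \<open>m > K\<close> m m' by simp
  next
    case False
    obtain m' where "m' > m" "tail_norm (N - Suc k) w (u' + w k *\<^sub>R y k m') < c"
      using eventually_U_large[OF ev[OF assms(3)]] by blast
    then show ?thesis using that[of m m'] \<open>m > K\<close> m False by simp
  qed
qed

lemma exists_index_pairs:
  assumes "model_norm w < c" "k \<le> N"
  shows "\<exists>a b. strict_mono_on {..<k} a \<and> strict_mono_on {..<k} b \<and> (\<forall>i<k. a i = b i \<longleftrightarrow> w i = 0) \<and>
    tail_norm (N - k) w (\<Sum>i<k. w i *\<^sub>R y i (a i)) < c \<and> tail_norm (N - k) w (\<Sum>i<k. w i *\<^sub>R y i (b i)) < c"
  using \<open>k \<le> N\<close>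
proof (induction k)
  case 0
  then show ?case using assms(1) by (intro exI[of _ id]) (simp add: model_norm_def strict_mono_on_def)
next
  case (Suc k)
  then obtain a b where a: "strict_mono_on {..<k} a" and b: "strict_mono_on {..<k} b"
    and ab: "\<forall>i<k. a i = b i \<longleftrightarrow> w i = 0"
    and ta: "tail_norm (N - k) w (\<Sum>i<k. w i *\<^sub>R y i (a i)) < c"
    and tb: "tail_norm (N - k) w (\<Sum>i<k. w i *\<^sub>R y i (b i)) < c"
    by auto
  have "k < N" using Suc.prems by simp
  then obtain m m' where "m > (\<Sum>i<k. a i + b i)" "m' > (\<Sum>i<k. a i + b i)" "m' = m \<longleftrightarrow> w k = 0"
    and "tail_norm (N - Suc k) w ((\<Sum>i<k. w i *\<^sub>R y i (a i)) + w k *\<^sub>R y k m) < c"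
    and "tail_norm (N - Suc k) w ((\<Sum>i<k. w i *\<^sub>R y i (b i)) + w k *\<^sub>R y k m') < c"
    using ta tb by (rule exists_next_indices)
  moreover have "a i < m" "b i < m'" if "i < k" for i
    using member_le_sum[of i "{..<k}" "\<lambda>i. a i + b i"] that \<open>m > _\<close> \<open>m' > _\<close> by auto
  then have "strict_mono_on {..<Suc k} (a(k := m))" "strict_mono_on {..<Suc k} (b(k := m'))"
    using strict_mono_on_lessThan_extend a b by blast+
  moreover have "\<forall>i<Suc k. (a(k := m)) i = (b(k := m')) i \<longleftrightarrow> w i = 0"
    using ab \<open>m' = m \<longleftrightarrow> w k = 0\<close> by (auto simp: less_Suc_eq)
  moreover have sum_upd: "(\<Sum>i<Suc k. w i *\<^sub>R y i ((d(k := n)) i)) = (\<Sum>i<k. w i *\<^sub>R y i (d i)) + w k *\<^sub>R y k n"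
    for d :: "nat \<Rightarrow> nat" and n by (simp add: lessThan_Suc_atMost[symmetric] atLeast0AtMost[symmetric])
  ultimately show ?case
    by (intro exI[of _ "a(k := m)"] exI[of _ "b(k := m')"] conjI) (simp_all only: sum_upd)
qed

lemma exists_close_index_pair:
  assumes "J \<subseteq> {..<N}" "model_norm (\<lambda>i. if i \<in> J then 1 else 0) < c"
  shows "\<exists>a b. strict_mono_on {..<N} a \<and> strict_mono_on {..<N} b \<and> {i. i < N \<and> a i \<noteq> b i} = J \<and>
    norm ((\<Sum>i<N. y i (a i)) - (\<Sum>i<N. y i (b i))) < 2 * c"
proof -
  define w :: "nat \<Rightarrow> real" where "w = (\<lambda>i. if i \<in> J then 1 else 0)"
  have "model_norm w < c" using assms(2) by (simp add: w_def)
  from exists_index_pairs[OF this order_refl]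
  obtain a b where a: "strict_mono_on {..<N} a" and b: "strict_mono_on {..<N} b"
    and ab: "\<forall>i<N. a i = b i \<longleftrightarrow> w i = 0"
    and "norm (\<Sum>i<N. w i *\<^sub>R y i (a i)) < c" "norm (\<Sum>i<N. w i *\<^sub>R y i (b i)) < c"
    by auto
  moreover have "(\<Sum>i<N. y i (a i)) - (\<Sum>i<N. y i (b i))
      = (\<Sum>i<N. w i *\<^sub>R y i (a i)) - (\<Sum>i<N. w i *\<^sub>R y i (b i))"
    using ab unfolding sum_subtractf[symmetric] by (intro sum.cong) (auto simp: w_def)
  moreover have "{i. i < N \<and> a i \<noteq> b i} = J" using ab assms(1) by (auto simp: w_def split: if_splits)
  ultimately show ?thesis
    using a b norm_triangle_ineq4[of "\<Sum>i<N. w i *\<^sub>R y i (a i)" "\<Sum>i<N. w i *\<^sub>R y i (b i)"]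
    by (intro exI[of _ a] exI[of _ b]) auto
qed

end

section \<open>Close pairs at Hamming distance \<open>n\<close>\<close>

definition array_sum :: "nat \<Rightarrow> (nat \<Rightarrow> nat \<Rightarrow> 'a::real_normed_vector) \<Rightarrow> nat set \<Rightarrow> 'a" where
  "array_sum k y A = (\<Sum>i=1..k. y i (elem_of A (i - 1)))"

lemma elem_of_strict_mono_image:
  assumes "strict_mono_on {..<N} a" "i < N"
  shows "elem_of (a ` {..<N}) i = a i"
proof -
  have "sorted_wrt (<) (map a [0..<N])"
    using assms(1) by (auto simp: sorted_wrt_iff_nth_less strict_mono_on_def)
  then have "sorted (map a [0..<N])" "distinct (map a [0..<N])" by (auto simp: strict_sorted_iff)
  moreover have "a ` {..<N} = set (map a [0..<N])" by auto
  then have "sorted_list_of_set (a ` {..<N}) = sort (remdups (map a [0..<N]))"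
    by (simp only: sorted_list_of_set_sort_remdups)
  ultimately have "sorted_list_of_set (a ` {..<N}) = map a [0..<N]"
    by (simp add: distinct_remdups_id sorted_sort_id)
  then show ?thesis unfolding elem_of_def using assms(2) by simp
qed

lemma strict_mono_image_in_ksubsets:
  assumes "strict_mono_on {..<N} a"
  shows "a ` {..<N} \<in> ksubsets N"
  using card_image[OF strict_mono_on_imp_inj_on[OF assms]] by (simp add: ksubsets_def)

lemma hamming_dist_strict_mono_images:
  assumes "strict_mono_on {..<N} a" "strict_mono_on {..<N} b"
  shows "hamming_dist N (a ` {..<N}) (b ` {..<N}) = card {i. i < N \<and> a i \<noteq> b i}"
  unfolding hamming_dist_def using elem_of_strict_mono_image[OF assms(1)] elem_of_strict_mono_image[OF assms(2)]
  by (metis (lifting))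

lemma array_sum_strict_mono_image:
  assumes "strict_mono_on {..<N} a"
  shows "array_sum N y (a ` {..<N}) = (\<Sum>i<N. y (Suc i) (a i))"
  using elem_of_strict_mono_image[OF assms] by (simp add: array_sum_def sum.atLeast1_atMost_eq)

lemma normalized_weakly_null_array_close_pairs:
  fixes y :: "nat \<Rightarrow> nat \<Rightarrow> 'a::banach"
  assumes "N > 0" "normalized_weakly_null_array N y"
  shows "\<exists>E\<in>asym_structure TYPE('a) N. \<forall>J c. J \<subseteq> {..<N} \<longrightarrow> E (\<lambda>i. if i \<in> J then 1 else 0) < c \<longrightarrow>
    (\<exists>A\<in>ksubsets N. \<exists>B\<in>ksubsets N. hamming_dist N A B = card J \<and>
      norm (array_sum N y A - array_sum N y B) < 2 * c)"
proof -
  obtain U :: "nat filter" where "U \<le> sequentially" "is_ultrafilter U"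
    using ultrafilter_finer_exists[OF sequentially_bot] by blast
  then interpret asymptotic_model U N "\<lambda>i. y (Suc i)"
    using assms by unfold_locales (auto simp: normalized_weakly_null_array_def)
  show ?thesis
  proof (intro bexI[OF _ model_norm_in_asym_structure] allI impI)
    fix J c assume "J \<subseteq> {..<N}" "model_norm (\<lambda>i. if i \<in> J then 1 else 0) < c"
    then obtain a b where a: "strict_mono_on {..<N} a" and b: "strict_mono_on {..<N} b"
      and J: "{i. i < N \<and> a i \<noteq> b i} = J"
      and close: "norm ((\<Sum>i<N. y (Suc i) (a i)) - (\<Sum>i<N. y (Suc i) (b i))) < 2 * c"
      using exists_close_index_pair by blast
    show "\<exists>A\<in>ksubsets N. \<exists>B\<in>ksubsets N. hamming_dist N A B = card J \<and>
      norm (array_sum N y A - array_sum N y B) < 2 * c"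
      using a b J close strict_mono_image_in_ksubsets[OF a] strict_mono_image_in_ksubsets[OF b]
        hamming_dist_strict_mono_images[OF a b] array_sum_strict_mono_image[OF a, of y]
        array_sum_strict_mono_image[OF b, of y]
      by (intro bexI[of _ "a ` {..<N}"] bexI[of _ "b ` {..<N}"]) auto
  qed
qed

lemma sup_norm_eqI:
  assumes "i0 < n" "\<bar>a i0\<bar> = c" "\<And>i. i < n \<Longrightarrow> \<bar>a i\<bar> \<le> c"
  shows "sup_norm n a = c"
  unfolding sup_norm_def using assms by (auto intro!: Max_eqI)

lemma zero_norm_in_asym_structure: "(\<lambda>_. 0) \<in> asym_structure TYPE('a::real_normed_vector) 0"
  unfolding asym_structure_def
proof (intro CollectI conjI allI impI)
  show "normalized_monotone_norm 0 (\<lambda>_. 0)"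
    by (auto simp: normalized_monotone_norm_def is_norm_on_def supp_in_def)
  fix \<epsilon> :: real assume "\<epsilon> > 0"
  then show "asym_game (\<lambda>x::nat \<Rightarrow> 'a. C_equiv 0 (1 + \<epsilon>) (vec_norm 0 x) (\<lambda>a. (\<lambda>_. 0) (\<lambda>i. if i < 0 then a i else 0))) 0 0 (\<lambda>_. 0)"
    unfolding C_equiv_def vec_norm_def by (auto intro!: exI[of _ 1])
qed

lemma indicator_le_of_C_equiv_sup_norm:
  fixes E :: "(nat \<Rightarrow> real) \<Rightarrow> real" and idx :: "nat \<Rightarrow> nat"
  assumes "C_equiv n C (\<lambda>a. E (\<lambda>j. \<Sum>k<n. if j = idx k then a k else 0)) (sup_norm n)"
    and "n > 0" "inj_on idx {..<n}" "E (unit_vec (idx 0)) = 1"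
  shows "E (\<lambda>j. if j \<in> idx ` {..<n} then 1 else 0) \<le> C"
proof -
  obtain A B where "A > 0" "A * B \<le> C" and equiv: "\<And>a.
      1 / A * E (\<lambda>j. \<Sum>k<n. if j = idx k then (if k < n then a k else 0) else 0) \<le> sup_norm n (\<lambda>i. if i < n then a i else 0) \<and>
      sup_norm n (\<lambda>i. if i < n then a i else 0) \<le> B * E (\<lambda>j. \<Sum>k<n. if j = idx k then (if k < n then a k else 0) else 0)"
    using assms(1) unfolding C_equiv_def by blast
  have "(\<Sum>k<n. if j = idx k then (if k < n then (if k = 0 then 1 else 0) else 0) else 0)
      = (\<Sum>k<n. if k = 0 then unit_vec (idx 0) j else 0)" for j
    by (intro sum.cong) (auto simp: unit_vec_def)
  then have "(\<lambda>j. \<Sum>k<n. if j = idx k then (if k < n then (if k = 0 then 1 else 0) else 0) else 0) = unit_vec (idx 0)"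
    using \<open>n > 0\<close> by simp
  moreover have "sup_norm n (\<lambda>i. if i < n then (if i = 0 then 1 else 0) else 0) = 1"
    using \<open>n > 0\<close> by (intro sup_norm_eqI[of 0]) auto
  ultimately have "1 \<le> B" using equiv[of "\<lambda>k. if k = 0 then 1 else 0"] assms(4) by simp
  have indicator: "(\<lambda>j. \<Sum>k<n. if j = idx k then (if k < n then 1 else 0) else 0) = (\<lambda>j. if j \<in> idx ` {..<n} then 1 else 0)"
  proof (rule ext)
    fix j
    show "(\<Sum>k<n. if j = idx k then (if k < n then 1 else 0) else 0) = (if j \<in> idx ` {..<n} then 1 else 0)"
  proof (cases "j \<in> idx ` {..<n}")
    case True
    then obtain k0 where "k0 < n" "j = idx k0" by blast
    then have "(\<Sum>k<n. if j = idx k then (if k < n then 1 else 0) else 0) = (\<Sum>k<n. if k = k0 then 1 else 0)"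
      using assms(3) by (intro sum.cong) (auto simp: inj_on_def)
    then show ?thesis using True \<open>k0 < n\<close> by simp
  qed (auto intro!: sum.neutral)
  qed
  have "sup_norm n (\<lambda>i. if i < n then 1 else 0) = 1"
    using \<open>n > 0\<close> by (intro sup_norm_eqI[of 0]) auto
  then have "1 / A * E (\<lambda>j. if j \<in> idx ` {..<n} then 1 else 0) \<le> 1"
    using equiv[of "\<lambda>_. 1"] unfolding indicator by simp
  then have "E (\<lambda>j. if j \<in> idx ` {..<n} then 1 else 0) \<le> A * 1" using \<open>A > 0\<close> by (simp add: field_simps)
  also have "\<dots> \<le> A * B" using \<open>1 \<le> B\<close> \<open>A > 0\<close> by (intro mult_left_mono) auto
  finally show ?thesis using \<open>A * B \<le> C\<close> by simp
qed

lemma asymptotic_subsequential_c0_indicator_bound: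
  assumes "asymptotic_subsequential_c0 TYPE('a::real_normed_vector)"
  obtains C where "\<And>n. n > 0 \<Longrightarrow> \<exists>N>0. \<forall>E\<in>asym_structure TYPE('a) N.
    \<exists>J\<subseteq>{..<N}. card J = n \<and> E (\<lambda>i. if i \<in> J then 1 else 0) \<le> C"
proof -
  obtain C where c0: "\<forall>n. \<exists>N. \<forall>E\<in>asym_structure TYPE('a) N. \<exists>idx. strict_mono_on {..<n} idx \<and>
      (\<forall>k<n. idx k < N) \<and> C_equiv n C (\<lambda>a. E (\<lambda>j. \<Sum>k<n. if j = idx k then a k else 0)) (sup_norm n)"
    using assms unfolding asymptotic_subsequential_c0_def by blast
  have "\<exists>N>0. \<forall>E\<in>asym_structure TYPE('a) N. \<exists>J\<subseteq>{..<N}. card J = n \<and> E (\<lambda>i. if i \<in> J then 1 else 0) \<le> C"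
    if "n > 0" for n
  proof -
    obtain N where N: "\<forall>E\<in>asym_structure TYPE('a) N. \<exists>idx. strict_mono_on {..<n} idx \<and>
        (\<forall>k<n. idx k < N) \<and> C_equiv n C (\<lambda>a. E (\<lambda>j. \<Sum>k<n. if j = idx k then a k else 0)) (sup_norm n)"
      using c0 by blast
    have "N > 0"
    proof (rule ccontr)
      assume "\<not> N > 0"
      then obtain idx :: "nat \<Rightarrow> nat" where "\<forall>k<n. idx k < 0"
        using N zero_norm_in_asym_structure by fastforce
      then show False using \<open>n > 0\<close> by blast
    qed
    moreover have "\<exists>J\<subseteq>{..<N}. card J = n \<and> E (\<lambda>i. if i \<in> J then 1 else 0) \<le> C"
      if E: "E \<in> asym_structure TYPE('a) N" for E
    proof -
      obtain idx where "strict_mono_on {..<n} idx" "\<forall>k<n. idx k < N"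
        and equiv: "C_equiv n C (\<lambda>a. E (\<lambda>j. \<Sum>k<n. if j = idx k then a k else 0)) (sup_norm n)"
        using N E by blast
      moreover have "E (unit_vec (idx 0)) = 1"
        using E \<open>\<forall>k<n. idx k < N\<close> \<open>n > 0\<close> by (simp add: asym_structure_def normalized_monotone_norm_def)
      moreover have "inj_on idx {..<n}" using \<open>strict_mono_on {..<n} idx\<close> by (rule strict_mono_on_imp_inj_on)
      ultimately show ?thesis
        using indicator_le_of_C_equiv_sup_norm[OF equiv \<open>n > 0\<close>] card_image[of idx "{..<n}"]
        by (intro exI[of _ "idx ` {..<n}"]) auto
    qed
    ultimately show ?thesis by blast
  qed
  then show ?thesis using that by blast
qed

lemma equi_coarse_embeddings_far_apart:
  assumes "equi_coarse_embeddings f"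
  obtains n where "n > 0" "\<And>k A B. k \<ge> 1 \<Longrightarrow> A \<in> ksubsets k \<Longrightarrow> B \<in> ksubsets k \<Longrightarrow>
    hamming_dist k A B = n \<Longrightarrow> K \<le> norm (f k A - f k B)"
proof -
  obtain \<rho> :: "real \<Rightarrow> real" where "filterlim \<rho> at_top at_top"
    and lower: "\<forall>k\<ge>1. \<forall>A\<in>ksubsets k. \<forall>B\<in>ksubsets k. \<rho> (real (hamming_dist k A B)) \<le> norm (f k A - f k B)"
    using assms unfolding equi_coarse_embeddings_def by blast
  have "eventually (\<lambda>n. K \<le> \<rho> (real n) \<and> n > 0) sequentially"
    using filterlim_compose[OF \<open>filterlim \<rho> at_top at_top\<close> filterlim_real_sequentially]
    by (auto simp: filterlim_at_top intro: eventually_conj eventually_gt_at_top)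
  then obtain n where "n > 0" "K \<le> \<rho> (real n)" unfolding eventually_sequentially by blast
  show ?thesis
  proof (rule that[OF \<open>n > 0\<close>])
    fix k A B assume "k \<ge> 1" "A \<in> ksubsets k" "B \<in> ksubsets k" "hamming_dist k A B = n"
    then have "\<rho> (real n) \<le> norm (f k A - f k B)" using lower by blast
    then show "K \<le> norm (f k A - f k B)" using \<open>K \<le> \<rho> (real n)\<close> by linarith
  qed
qed

lemma asymptotic_subsequential_c0_close_pairs:
  assumes "asymptotic_subsequential_c0 TYPE('a::banach)"
  obtains C where "\<And>n. n > 0 \<Longrightarrow> \<exists>N>0. \<forall>y :: nat \<Rightarrow> nat \<Rightarrow> 'a. normalized_weakly_null_array N y \<longrightarrow>
    (\<exists>A\<in>ksubsets N. \<exists>B\<in>ksubsets N. hamming_dist N A B = n \<and>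
      norm (array_sum N y A - array_sum N y B) < C)"
proof -
  obtain C where bound: "\<And>n. n > 0 \<Longrightarrow> \<exists>N>0. \<forall>E\<in>asym_structure TYPE('a) N.
      \<exists>J\<subseteq>{..<N}. card J = n \<and> E (\<lambda>i. if i \<in> J then 1 else 0) \<le> C"
    using asymptotic_subsequential_c0_indicator_bound[OF assms] by blast
  have close: "\<exists>A\<in>ksubsets N. \<exists>B\<in>ksubsets N. hamming_dist N A B = n \<and>
      norm (array_sum N y A - array_sum N y B) < 2 * (C + 1)"
    if "N > 0" and small: "\<forall>E\<in>asym_structure TYPE('a) N.
      \<exists>J\<subseteq>{..<N}. card J = n \<and> E (\<lambda>i. if i \<in> J then 1 else 0) \<le> C"
      and y: "normalized_weakly_null_array N y" for n N and y :: "nat \<Rightarrow> nat \<Rightarrow> 'a"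
  proof -
    obtain E where "E \<in> asym_structure TYPE('a) N" and pairs: "\<forall>J c. J \<subseteq> {..<N} \<longrightarrow>
        E (\<lambda>i. if i \<in> J then 1 else 0) < c \<longrightarrow> (\<exists>A\<in>ksubsets N. \<exists>B\<in>ksubsets N. hamming_dist N A B = card J \<and>
          norm (array_sum N y A - array_sum N y B) < 2 * c)"
      using normalized_weakly_null_array_close_pairs[OF \<open>N > 0\<close> y] by blast
    obtain J where J: "J \<subseteq> {..<N}" "card J = n" "E (\<lambda>i. if i \<in> J then 1 else 0) \<le> C"
      using small \<open>E \<in> asym_structure TYPE('a) N\<close> by blast
    then have "E (\<lambda>i. if i \<in> J then 1 else 0) < C + 1" by simp
    from pairs[rule_format, OF J(1) this] show ?thesis unfolding J(2) .
  qed
  show ?thesis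
  proof (rule that)
    fix n :: nat assume "n > 0"
    then obtain N where "N > 0" and "\<forall>E\<in>asym_structure TYPE('a) N.
        \<exists>J\<subseteq>{..<N}. card J = n \<and> E (\<lambda>i. if i \<in> J then 1 else 0) \<le> C"
      using bound by blast
    with close show "\<exists>N>0. \<forall>y :: nat \<Rightarrow> nat \<Rightarrow> 'a. normalized_weakly_null_array N y \<longrightarrow>
      (\<exists>A\<in>ksubsets N. \<exists>B\<in>ksubsets N. hamming_dist N A B = n \<and>
        norm (array_sum N y A - array_sum N y B) < 2 * (C + 1))"
      by blast
  qed
qed

theorem proposition4p6:
  assumes "asymptotic_subsequential_c0 TYPE('a::banach)"
  shows "\<not> (\<exists>f :: nat \<Rightarrow> nat set \<Rightarrow> 'a.
            equi_coarse_embeddings f \<and>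
            (\<forall>k\<ge>1. \<exists>y :: nat \<Rightarrow> nat \<Rightarrow> 'a.
                normalized_weakly_null_array k y \<and>
                (\<forall>A\<in>ksubsets k. f k A = (\<Sum>i=1..k. y i (elem_of A (i - 1))))))"
proof (intro notI, elim exE conjE)
  fix f :: "nat \<Rightarrow> nat set \<Rightarrow> 'a"
  assume "equi_coarse_embeddings f" and arrays: "\<forall>k\<ge>1. \<exists>y :: nat \<Rightarrow> nat \<Rightarrow> 'a.
    normalized_weakly_null_array k y \<and> (\<forall>A\<in>ksubsets k. f k A = (\<Sum>i=1..k. y i (elem_of A (i - 1))))"
  obtain C where close: "\<And>n. n > 0 \<Longrightarrow> \<exists>N>0. \<forall>y :: nat \<Rightarrow> nat \<Rightarrow> 'a. normalized_weakly_null_array N y \<longrightarrow>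
      (\<exists>A\<in>ksubsets N. \<exists>B\<in>ksubsets N. hamming_dist N A B = n \<and>
        norm (array_sum N y A - array_sum N y B) < C)"
    using asymptotic_subsequential_c0_close_pairs[OF assms] by blast
  obtain n where "n > 0" and far: "\<And>k A B. k \<ge> 1 \<Longrightarrow> A \<in> ksubsets k \<Longrightarrow> B \<in> ksubsets k \<Longrightarrow>
      hamming_dist k A B = n \<Longrightarrow> C \<le> norm (f k A - f k B)"
    using equi_coarse_embeddings_far_apart[where K = C, OF \<open>equi_coarse_embeddings f\<close>] by blast
  obtain N where "N > 0" and close_N: "\<forall>y :: nat \<Rightarrow> nat \<Rightarrow> 'a. normalized_weakly_null_array N y \<longrightarrow>
      (\<exists>A\<in>ksubsets N. \<exists>B\<in>ksubsets N. hamming_dist N A B = n \<and>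
        norm (array_sum N y A - array_sum N y B) < C)"
    using close[OF \<open>n > 0\<close>] by blast
  have "N \<ge> 1" using \<open>N > 0\<close> by simp
  then obtain y where "normalized_weakly_null_array N y"
    and f_N: "\<forall>A\<in>ksubsets N. f N A = array_sum N y A"
    using arrays unfolding array_sum_def by blast
  then obtain A B where "A \<in> ksubsets N" "B \<in> ksubsets N" "hamming_dist N A B = n"
    and "norm (array_sum N y A - array_sum N y B) < C"
    using close_N by blast
  with f_N have "norm (f N A - f N B) < C" by simp
  then show False using far[of N A B] \<open>N \<ge> 1\<close> \<open>A \<in> ksubsets N\<close> \<open>B \<in> ksubsets N\<close>
    \<open>hamming_dist N A B = n\<close> by simp
qed

end
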